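(* For each $0\ne a\in\mathbb{R}$, the translation operator $\tau_a:C^\infty(\mathbb{R},\mathbb{C})\to C^\infty(\mathbb{R},\mathbb{C})$, $\tau_a(f)(x)=f(x+a)$, supports a hypercyclic algebra.
   Context: $C^\infty(\mathbb{R},\mathbb{C})$ is the Fréchet algebra (pointwise operations) of complex-valued smooth functions on $\mathbb{R}$ with seminorms $p_k(f)=\max_{0\le j\le k}\max_{t\in[-k,k]}|f^{(j)}(t)|$. An operator $T$ supports a hypercyclic algebra if there is a subalgebra $A\ne\{0\}$ all of whose nonzero elements $f$ have dense orbit $\{T^nf:n\ge0\}$. *)

theory Defs
  imports "HOL-Analysis.Analysis"
begin

fun vderiv :: "nat \<Rightarrow> (real \<Rightarrow> complex) \<Rightarrow> (real \<Rightarrow> complex)" where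
  "vderiv 0 f = f"
| "vderiv (Suc j) f = (\<lambda>x. vector_derivative (vderiv j f) (at x))"

definition smooth_fun :: "(real \<Rightarrow> complex) set" where
  "smooth_fun = {f. \<forall>j x. vderiv j f differentiable (at x)}"

definition seminorm_p :: "nat \<Rightarrow> (real \<Rightarrow> complex) \<Rightarrow> real" where
  "seminorm_p k f = (SUP j\<in>{..k}. SUP t\<in>{-real k..real k}. norm (vderiv j f t))"

definition tau :: "real \<Rightarrow> (real \<Rightarrow> complex) \<Rightarrow> (real \<Rightarrow> complex)" where
  "tau a f = (\<lambda>x. f (x + a))"

text \<open>Density of the orbit of f under T in the Frechet space C^infinity(R,C):
  every basic neighbourhood {h. p_k(h - g) < e} of every g meets the orbit.\<close>
definition hypercyclic_vector :: "((real \<Rightarrow> complex) \<Rightarrow> (real \<Rightarrow> complex)) \<Rightarrow> (real \<Rightarrow> complex) \<Rightarrow> bool" where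
  "hypercyclic_vector T f \<longleftrightarrow>
     (\<forall>g\<in>smooth_fun. \<forall>k. \<forall>e>0. \<exists>n. seminorm_p k (\<lambda>x. (T ^^ n) f x - g x) < e)"

definition smooth_subalgebra :: "(real \<Rightarrow> complex) set \<Rightarrow> bool" where
  "smooth_subalgebra A \<longleftrightarrow> A \<subseteq> smooth_fun \<and> (\<lambda>x. 0) \<in> A \<and>
     (\<forall>f\<in>A. \<forall>g\<in>A. (\<lambda>x. f x + g x) \<in> A \<and> (\<lambda>x. f x * g x) \<in> A) \<and>
     (\<forall>c::complex. \<forall>f\<in>A. (\<lambda>x. c * f x) \<in> A)"

definition supports_hypercyclic_algebra :: "((real \<Rightarrow> complex) \<Rightarrow> (real \<Rightarrow> complex)) \<Rightarrow> bool" where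
  "supports_hypercyclic_algebra T \<longleftrightarrow>
     (\<exists>A. smooth_subalgebra A \<and> A \<noteq> {\<lambda>x. 0} \<and>
          (\<forall>f\<in>A. f \<noteq> (\<lambda>x. 0) \<longrightarrow> hypercyclic_vector T f))"

end

theory Submission
  imports Defs "HOL-Complex_Analysis.Complex_Analysis"
begin

text \<open>
  A hypercyclic vector \<open>f\<close> for \<open>\<tau>\<^sub>a\<close> is obtained by placing, at points \<open>n a\<close> far apart,
  cut-off copies of every polynomial \<open>p\<close> with Gaussian-rational coefficients, the copy indexed by
  \<open>(k, p)\<close> agreeing with \<open>p\<close> on \<open>[-k-1, k+1]\<close>; since such polynomials approximate every smooth
  function in every seminorm \<open>p\<^sub>k\<close>, the orbit of \<open>f\<close> is dense.
  The algebra is \<open>{P \<circ> f | P(0) = 0}\<close>. For nonconstant \<open>P\<close>, the map \<open>w \<mapsto> P \<circ> w\<close> has dense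
  range in \<open>C\<^sup>\<infinity>\<close>: a smooth \<open>g\<close>, shifted by a small constant so that it avoids the finitely
  many critical values of \<open>P\<close> on \<open>[-K, K]\<close>, lifts through the covering map
  \<open>P : \<complex> - P\<^sup>-\<^sup>1(crit) \<rightarrow> \<complex> - crit\<close>, and the lift is smooth because \<open>P\<close> has local holomorphic
  inverses there. Since \<open>\<tau>\<^sub>a\<close> commutes with \<open>w \<mapsto> P \<circ> w\<close>, which is continuous, density of the orbit
  of \<open>f\<close> transfers to the orbit of \<open>P \<circ> f\<close>.
\<close>

section \<open>Iterated derivatives and smoothness on open sets\<close>

lemma vderiv_1: "vderiv 1 f = (\<lambda>x. vector_derivative f (at x))"
  by simp

declare vderiv.simps(2)[simp del]

lemma vderiv_Suc_0 [simp]: "vderiv (Suc 0) f = (\<lambda>x. vector_derivative f (at x))"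
  by (simp add: vderiv.simps(2))

lemma vderiv_Suc': "vderiv (Suc i) f = vderiv i (vderiv 1 f)"
proof (induction i)
  case (Suc i)
  have "vderiv (Suc (Suc i)) f = (\<lambda>x. vector_derivative (vderiv (Suc i) f) (at x))"
    by (rule vderiv.simps(2))
  also have "\<dots> = vderiv (Suc i) (vderiv 1 f)"
    using Suc by (simp add: vderiv.simps(2))
  finally show ?case .
qed simp

lemma vderiv_const: "vderiv i (\<lambda>x. c) = (\<lambda>x. if i = 0 then c else 0)"
  by (induction i) (simp_all add: vderiv.simps(2))

lemma vector_derivative_cong_open:
  assumes "open U" "x \<in> U" "\<And>y. y \<in> U \<Longrightarrow> f y = g y"
  shows "vector_derivative f (at x) = vector_derivative g (at x)"
proof -
  have "(f has_vector_derivative D) (at x) \<longleftrightarrow> (g has_vector_derivative D) (at x)" for D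
    using assms has_vector_derivative_transform_within_open[of _ _ x U] by metis
  then show ?thesis unfolding vector_derivative_def by simp
qed

lemma vderiv_cong_open:
  assumes "open U" "\<And>y. y \<in> U \<Longrightarrow> f y = g y" "x \<in> U"
  shows "vderiv i f x = vderiv i g x"
  using assms(3)
proof (induction i arbitrary: x)
  case (Suc i)
  then show ?case
    using vector_derivative_cong_open[OF assms(1) Suc.prems, of "vderiv i f" "vderiv i g"]
    by (simp add: vderiv.simps(2))
qed (use assms in simp)

lemma differentiable_cong_open:
  fixes f g :: "real \<Rightarrow> complex"
  assumes "open U" "\<And>y. y \<in> U \<Longrightarrow> f y = g y" "x \<in> U" "f differentiable (at x)"
  shows "g differentiable (at x)"
proof -
  have "(f has_vector_derivative (vector_derivative f (at x))) (at x)"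
    using assms(4) vector_derivative_works by blast
  then have "(g has_vector_derivative (vector_derivative f (at x))) (at x)"
    using has_vector_derivative_transform_within_open assms(1,2,3) by blast
  then show ?thesis by (rule differentiableI_vector)
qed

text \<open>\<open>smooth_upto n U f\<close> says that \<open>f\<close> is \<open>n + 1\<close> times differentiable at every point of \<open>U\<close>;
  the finite order is what makes the closure properties below provable by induction.\<close>

definition smooth_upto :: "nat \<Rightarrow> real set \<Rightarrow> (real \<Rightarrow> complex) \<Rightarrow> bool" where
  "smooth_upto n U f \<longleftrightarrow> (\<forall>i\<le>n. \<forall>x\<in>U. vderiv i f differentiable (at x))"

definition smooth_on :: "real set \<Rightarrow> (real \<Rightarrow> complex) \<Rightarrow> bool" where
  "smooth_on U f \<longleftrightarrow> (\<forall>n. smooth_upto n U f)"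

lemma smooth_fun_iff_smooth_on: "f \<in> smooth_fun \<longleftrightarrow> smooth_on UNIV f"
  by (auto simp: smooth_fun_def smooth_on_def smooth_upto_def)

lemma smooth_upto_0: "smooth_upto 0 U f \<longleftrightarrow> (\<forall>x\<in>U. f differentiable (at x))"
  by (simp add: smooth_upto_def)

lemma smooth_upto_Suc:
  "smooth_upto (Suc n) U f \<longleftrightarrow> (\<forall>x\<in>U. f differentiable (at x)) \<and> smooth_upto n U (vderiv 1 f)"
proof
  assume A: "smooth_upto (Suc n) U f"
  have "smooth_upto n U (vderiv 1 f)"
    unfolding smooth_upto_def
  proof (intro allI impI)
    fix i assume "i \<le> n"
    then have "\<forall>x\<in>U. vderiv (Suc i) f differentiable (at x)"
      using A unfolding smooth_upto_def by (metis Suc_le_mono)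
    then show "\<forall>x\<in>U. vderiv i (vderiv 1 f) differentiable (at x)" by (simp only: vderiv_Suc'[of i f])
  qed
  moreover have "\<forall>x\<in>U. vderiv 0 f differentiable (at x)" using A unfolding smooth_upto_def by blast
  ultimately show "(\<forall>x\<in>U. f differentiable (at x)) \<and> smooth_upto n U (vderiv 1 f)" by simp
next
  assume B: "(\<forall>x\<in>U. f differentiable (at x)) \<and> smooth_upto n U (vderiv 1 f)"
  show "smooth_upto (Suc n) U f"
    unfolding smooth_upto_def
  proof (intro allI impI)
    fix i assume "i \<le> Suc n"
    show "\<forall>x\<in>U. vderiv i f differentiable (at x)"
    proof (cases i)
      case (Suc i')
      then have "\<forall>x\<in>U. vderiv i' (vderiv 1 f) differentiable (at x)"
        using B \<open>i \<le> Suc n\<close> unfolding smooth_upto_def by simp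
      then show ?thesis using Suc by (simp only: vderiv_Suc'[of i' f])
    qed (use B in simp)
  qed
qed

lemma smooth_upto_mono: "smooth_upto n U f \<Longrightarrow> m \<le> n \<Longrightarrow> V \<subseteq> U \<Longrightarrow> smooth_upto m V f"
  by (auto simp: smooth_upto_def)

lemma smooth_upto_cong_open:
  assumes "open U" "\<And>y. y \<in> U \<Longrightarrow> f y = g y" "smooth_upto n U f"
  shows "smooth_upto n U g"
  unfolding smooth_upto_def
proof (intro allI impI ballI)
  fix i x assume "i \<le> n" "x \<in> U"
  then have "vderiv i f differentiable (at x)" using assms(3) by (auto simp: smooth_upto_def)
  moreover have "\<And>y. y \<in> U \<Longrightarrow> vderiv i f y = vderiv i g y"
    using vderiv_cong_open[of U f g] assms(1,2) by blast
  ultimately show "vderiv i g differentiable (at x)"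
    using differentiable_cong_open[OF assms(1) _ \<open>x \<in> U\<close>] by blast
qed

lemma smooth_upto_const: "smooth_upto n U (\<lambda>x. c)"
  unfolding smooth_upto_def vderiv_const by simp

lemma has_vector_derivative_lincomb:
  fixes f g :: "real \<Rightarrow> complex"
  assumes "f differentiable (at y)" "g differentiable (at y)"
  shows "((\<lambda>x. a * f x + b * g x) has_vector_derivative
           a * vector_derivative f (at y) + b * vector_derivative g (at y)) (at y)"
  using has_vector_derivative_add[OF
      has_vector_derivative_mult[OF has_vector_derivative_const vector_derivative_works[THEN iffD1, OF assms(1)]]
      has_vector_derivative_mult[OF has_vector_derivative_const vector_derivative_works[THEN iffD1, OF assms(2)]]]
  by simp

lemma vderiv_lincomb:
  fixes f g :: "real \<Rightarrow> complex"
  assumes "open U" "smooth_upto n U f" "smooth_upto n U g" "i \<le> Suc n" "x \<in> U"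
  shows "vderiv i (\<lambda>x. a * f x + b * g x) x = a * vderiv i f x + b * vderiv i g x"
  using assms(2-5)
proof (induction i arbitrary: n f g x)
  case (Suc i)
  have df: "f differentiable (at y)" and dg: "g differentiable (at y)" if "y \<in> U" for y
    using Suc.prems that unfolding smooth_upto_def by (metis le0 vderiv.simps(1))+
  have first: "vderiv 1 (\<lambda>x. a * f x + b * g x) y = a * vderiv 1 f y + b * vderiv 1 g y"
    if "y \<in> U" for y
    using vector_derivative_at[OF has_vector_derivative_lincomb[OF df dg]] that by (simp add: vderiv_1)
  have "vderiv (Suc i) (\<lambda>x. a * f x + b * g x) x = vderiv i (vderiv 1 (\<lambda>x. a * f x + b * g x)) x"
    by (simp only: vderiv_Suc'[of i])
  also have "\<dots> = vderiv i (\<lambda>y. a * vderiv 1 f y + b * vderiv 1 g y) x"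
    using vderiv_cong_open[of U "vderiv 1 (\<lambda>x. a * f x + b * g x)"
        "\<lambda>y. a * vderiv 1 f y + b * vderiv 1 g y" x i] assms(1) first Suc.prems(4) by blast
  also have "\<dots> = a * vderiv i (vderiv 1 f) x + b * vderiv i (vderiv 1 g) x"
  proof (cases n)
    case 0
    then show ?thesis using Suc.prems by simp
  next
    case (Suc n')
    then have "smooth_upto n' U (vderiv 1 f)" "smooth_upto n' U (vderiv 1 g)" "i \<le> Suc n'"
      using Suc.prems smooth_upto_Suc by auto
    then show ?thesis using Suc.IH Suc.prems(4) by blast
  qed
  also have "\<dots> = a * vderiv (Suc i) f x + b * vderiv (Suc i) g x"
    by (simp only: vderiv_Suc'[of i])
  finally show ?case .
qed simp

lemma smooth_upto_lincomb:
  fixes f g :: "real \<Rightarrow> complex"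
  assumes "open U" "smooth_upto n U f" "smooth_upto n U g"
  shows "smooth_upto n U (\<lambda>x. a * f x + b * g x)"
  unfolding smooth_upto_def
proof (intro allI impI ballI)
  fix i x assume i: "i \<le> n" and x: "x \<in> U"
  have eq: "\<And>y. y \<in> U \<Longrightarrow> a * vderiv i f y + b * vderiv i g y = vderiv i (\<lambda>x. a * f x + b * g x) y"
    using vderiv_lincomb[OF assms] i by simp
  have "(\<lambda>y. a * vderiv i f y + b * vderiv i g y) differentiable (at x)"
    using has_vector_derivative_lincomb[THEN differentiableI_vector] assms(2,3) i x
    unfolding smooth_upto_def by blast
  then show "vderiv i (\<lambda>x. a * f x + b * g x) differentiable (at x)"
    using differentiable_cong_open[of U "\<lambda>y. a * vderiv i f y + b * vderiv i g y"
        "vderiv i (\<lambda>x. a * f x + b * g x)" x] assms(1) eq x by blast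
qed

lemma smooth_upto_add:
  "open U \<Longrightarrow> smooth_upto n U f \<Longrightarrow> smooth_upto n U g \<Longrightarrow> smooth_upto n U (\<lambda>x. f x + g x)"
  using smooth_upto_lincomb[of U n f g 1 1] by simp

lemma smooth_upto_mult:
  fixes f g :: "real \<Rightarrow> complex"
  assumes "open U" "smooth_upto n U f" "smooth_upto n U g"
  shows "smooth_upto n U (\<lambda>x. f x * g x)"
  using assms(2,3)
proof (induction n arbitrary: f g)
  case 0
  then show ?case unfolding smooth_upto_0 by (simp add: differentiable_mult)
next
  case (Suc n)
  have df: "\<forall>y\<in>U. f differentiable (at y)" and dg: "\<forall>y\<in>U. g differentiable (at y)"
    using Suc.prems smooth_upto_Suc by blast+
  have "smooth_upto n U (\<lambda>y. f y * vderiv 1 g y)"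
    using Suc.IH Suc.prems smooth_upto_Suc smooth_upto_mono[of "Suc n" U f n U] by auto
  moreover have "smooth_upto n U (\<lambda>y. vderiv 1 f y * g y)"
    using Suc.IH Suc.prems smooth_upto_Suc smooth_upto_mono[of "Suc n" U g n U] by auto
  ultimately have "smooth_upto n U (\<lambda>y. f y * vderiv 1 g y + vderiv 1 f y * g y)"
    using smooth_upto_add[OF assms(1)] by blast
  moreover have "\<And>y. y \<in> U \<Longrightarrow> f y * vderiv 1 g y + vderiv 1 f y * g y = vderiv 1 (\<lambda>x. f x * g x) y"
    using df dg by (simp add: vderiv_1)
  ultimately have "smooth_upto n U (vderiv 1 (\<lambda>x. f x * g x))"
    using smooth_upto_cong_open[of U "\<lambda>y. f y * vderiv 1 g y + vderiv 1 f y * g y"] assms(1) by blast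
  then show ?case using df dg smooth_upto_Suc by (simp add: differentiable_mult)
qed

lemma has_vector_derivative_holomorphic_comp:
  assumes "q holomorphic_on S" "open S" "\<gamma> y \<in> S" "\<gamma> differentiable (at y)"
  shows "((\<lambda>x. q (\<gamma> x)) has_vector_derivative (vector_derivative \<gamma> (at y) * deriv q (\<gamma> y))) (at y)"
  using field_vector_diff_chain_at[OF vector_derivative_works[THEN iffD1, OF assms(4)]
      holomorphic_derivI[OF assms(1-3)]]
  by (simp add: o_def)

lemma smooth_upto_holomorphic_comp:
  assumes "open U" "open S" "q holomorphic_on S" "\<And>x. x \<in> U \<Longrightarrow> \<gamma> x \<in> S" "smooth_upto n U \<gamma>"
  shows "smooth_upto n U (\<lambda>x. q (\<gamma> x))"
  using assms(3,5)
proof (induction n arbitrary: q)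
  have hv: "((\<lambda>x. q (\<gamma> x)) has_vector_derivative (vector_derivative \<gamma> (at y) * deriv q (\<gamma> y))) (at y)"
    if "q holomorphic_on S" "y \<in> U" "\<gamma> differentiable (at y)" for q y
    using has_vector_derivative_holomorphic_comp[OF that(1) assms(2) assms(4)[OF that(2)] that(3)] .
  {
    case 0
    then show ?case unfolding smooth_upto_0 using hv differentiableI_vector by blast
  next
    case (Suc n)
    have dg: "\<forall>y\<in>U. \<gamma> differentiable (at y)" using Suc.prems smooth_upto_Suc by blast
    have "smooth_upto n U (\<lambda>y. deriv q (\<gamma> y))"
      using Suc.IH[of "deriv q"] holomorphic_deriv[OF Suc.prems(1) assms(2)] Suc.prems(2)
        smooth_upto_mono[of "Suc n" U \<gamma> n U] by auto
    then have "smooth_upto n U (\<lambda>y. vderiv 1 \<gamma> y * deriv q (\<gamma> y))"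
      using smooth_upto_mult[OF assms(1)] Suc.prems smooth_upto_Suc by blast
    moreover have "\<And>y. y \<in> U \<Longrightarrow> vderiv 1 \<gamma> y * deriv q (\<gamma> y) = vderiv 1 (\<lambda>x. q (\<gamma> x)) y"
      using vector_derivative_at[OF hv[OF Suc.prems(1)]] dg by simp
    ultimately have "smooth_upto n U (vderiv 1 (\<lambda>x. q (\<gamma> x)))"
      using smooth_upto_cong_open[of U "\<lambda>y. vderiv 1 \<gamma> y * deriv q (\<gamma> y)"] assms(1) by blast
    moreover have "\<forall>y\<in>U. (\<lambda>x. q (\<gamma> x)) differentiable (at y)"
      using hv[OF Suc.prems(1)] dg differentiableI_vector by blast
    ultimately show ?case using smooth_upto_Suc by blast
  }
qed

lemma smooth_on_lincomb:
  "open U \<Longrightarrow> smooth_on U f \<Longrightarrow> smooth_on U g \<Longrightarrow> smooth_on U (\<lambda>x. a * f x + b * g x)"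
  using smooth_upto_lincomb unfolding smooth_on_def by blast

lemma smooth_on_add: "open U \<Longrightarrow> smooth_on U f \<Longrightarrow> smooth_on U g \<Longrightarrow> smooth_on U (\<lambda>x. f x + g x)"
  using smooth_on_lincomb[of U f g 1 1] by simp

lemma smooth_on_diff: "open U \<Longrightarrow> smooth_on U f \<Longrightarrow> smooth_on U g \<Longrightarrow> smooth_on U (\<lambda>x. f x - g x)"
  using smooth_on_lincomb[of U f g 1 "-1"] by simp

lemma smooth_on_mult: "open U \<Longrightarrow> smooth_on U f \<Longrightarrow> smooth_on U g \<Longrightarrow> smooth_on U (\<lambda>x. f x * g x)"
  using smooth_upto_mult unfolding smooth_on_def by blast

lemma smooth_on_const: "smooth_on U (\<lambda>x. c)"
  using smooth_upto_const unfolding smooth_on_def by blast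

lemma smooth_on_holomorphic_comp:
  "open U \<Longrightarrow> open S \<Longrightarrow> q holomorphic_on S \<Longrightarrow> (\<And>x. x \<in> U \<Longrightarrow> \<gamma> x \<in> S) \<Longrightarrow> smooth_on U \<gamma>
    \<Longrightarrow> smooth_on U (\<lambda>x. q (\<gamma> x))"
  using smooth_upto_holomorphic_comp unfolding smooth_on_def by blast

lemma smooth_on_subset: "smooth_on U f \<Longrightarrow> V \<subseteq> U \<Longrightarrow> smooth_on V f"
  unfolding smooth_on_def using smooth_upto_mono by blast

lemma smooth_on_vderiv_1: "smooth_on U f \<Longrightarrow> smooth_on U (vderiv 1 f)"
  unfolding smooth_on_def using smooth_upto_Suc by blast

lemma smooth_on_vderiv: "smooth_on U f \<Longrightarrow> smooth_on U (vderiv i f)"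
proof (induction i arbitrary: f)
  case (Suc i)
  then show ?case using smooth_on_vderiv_1 by (simp only: vderiv_Suc'[of i])
qed simp

lemma smooth_on_differentiable: "smooth_on U f \<Longrightarrow> x \<in> U \<Longrightarrow> vderiv i f differentiable (at x)"
  unfolding smooth_on_def smooth_upto_def by blast

lemma smooth_on_imp_continuous_on: "smooth_on UNIV f \<Longrightarrow> continuous_on S f"
  by (intro continuous_at_imp_continuous_on ballI differentiable_imp_continuous_within)
    (use smooth_on_differentiable[of UNIV f _ 0] in auto)

lemma smooth_on_locally:
  fixes f :: "real \<Rightarrow> complex"
  assumes "\<And>x. x \<in> V \<Longrightarrow> \<exists>U g. open U \<and> x \<in> U \<and> smooth_on U g \<and> (\<forall>y\<in>U. f y = g y)"
  shows "smooth_on V f"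
  unfolding smooth_on_def smooth_upto_def
proof (intro allI impI ballI)
  fix n j x assume "x \<in> V"
  obtain U g where U: "open U" "x \<in> U" "smooth_on U g" "\<forall>y\<in>U. f y = g y"
    using assms \<open>x \<in> V\<close> by blast
  have "\<And>y. y \<in> U \<Longrightarrow> vderiv j g y = vderiv j f y"
    using vderiv_cong_open[of U g f] U by metis
  then show "vderiv j f differentiable (at x)"
    using differentiable_cong_open[of U "vderiv j g" "vderiv j f" x] U(1,2)
      smooth_on_differentiable[OF U(3) U(2)] by blast
qed
section \<open>Translations, affine substitutions and polynomials\<close>

lemma funpow_tau: "(tau a ^^ n) f = (\<lambda>x. f (x + real n * a))"
  by (induction n) (simp_all add: tau_def algebra_simps)

lemma has_vector_derivative_vderiv_affine:
  fixes f :: "real \<Rightarrow> complex"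
  assumes "smooth_on UNIV f"
  shows "((\<lambda>y. c * vderiv i f (s * y + b)) has_vector_derivative
            (c * (s * vderiv (Suc i) f (s * x + b)))) (at x)"
proof -
  have d: "(vderiv i f has_vector_derivative vderiv (Suc i) f (s * x + b)) (at (s * x + b))"
    using vector_derivative_works[THEN iffD1, OF smooth_on_differentiable[OF assms, of "s * x + b" i]]
    by (simp add: vderiv.simps(2))
  have a: "((\<lambda>y. s * y + b) has_vector_derivative s) (at x)"
    using has_real_derivative_iff_has_vector_derivative[THEN iffD1]
    by (auto intro!: derivative_eq_intros)
  have "((\<lambda>y. vderiv i f (s * y + b)) has_vector_derivative (s * vderiv (Suc i) f (s * x + b))) (at x)"
    using vector_diff_chain_at[OF a d] by (simp add: o_def scaleR_conv_of_real)
  from has_vector_derivative_mult[OF has_vector_derivative_const[of c] this] show ?thesis by simp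
qed

lemma vderiv_affine:
  fixes f :: "real \<Rightarrow> complex"
  assumes "smooth_on UNIV f"
  shows "vderiv i (\<lambda>x. f (s * x + b)) = (\<lambda>x. of_real s ^ i * vderiv i f (s * x + b))"
proof (induction i)
  case (Suc i)
  have "vderiv (Suc i) (\<lambda>x. f (s * x + b)) = (\<lambda>x. vector_derivative (vderiv i (\<lambda>x. f (s * x + b))) (at x))"
    by (simp add: vderiv.simps(2))
  also have "\<dots> = (\<lambda>x. of_real s ^ Suc i * vderiv (Suc i) f (s * x + b))"
    using vector_derivative_at[OF has_vector_derivative_vderiv_affine[OF assms, of "of_real s ^ i" i s b]] Suc
    by (simp add: ac_simps)
  finally show ?case .
qed simp

lemma smooth_on_affine:
  fixes f :: "real \<Rightarrow> complex"
  assumes "smooth_on UNIV f"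
  shows "smooth_on UNIV (\<lambda>x. f (s * x + b))"
  unfolding smooth_on_def smooth_upto_def vderiv_affine[OF assms]
  using has_vector_derivative_vderiv_affine[OF assms] differentiableI_vector by blast

lemma smooth_on_shift: "smooth_on UNIV f \<Longrightarrow> smooth_on UNIV (\<lambda>x. f (x + b))"
  using smooth_on_affine[of f 1 b] by simp

lemma smooth_on_of_real: "smooth_on U (\<lambda>x. complex_of_real x)"
proof -
  have "vderiv 1 (\<lambda>x. complex_of_real x) = (\<lambda>x. 1)"
    using vector_derivative_at[OF has_vector_derivative_of_real[OF DERIV_ident]] by (simp add: fun_eq_iff)
  then have vd: "vderiv (Suc i) (\<lambda>x. complex_of_real x) = (\<lambda>x. if i = 0 then 1 else 0)" for i
    by (simp only: vderiv_Suc'[of i] vderiv_const)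
  have "vderiv i (\<lambda>x. complex_of_real x) differentiable (at x)" for i x
  proof (cases i)
    case 0
    then show ?thesis using has_vector_derivative_of_real[OF DERIV_ident] differentiableI_vector by fastforce
  qed (simp add: vd)
  then show ?thesis by (simp add: smooth_on_def smooth_upto_def)
qed

lemma smooth_on_poly_comp: "open U \<Longrightarrow> smooth_on U u \<Longrightarrow> smooth_on U (\<lambda>x. poly P (u x))"
  by (rule smooth_on_holomorphic_comp[of U UNIV "poly P"]) (auto intro: poly_holomorphic_on holomorphic_on_id)

lemma smooth_on_poly: "open U \<Longrightarrow> smooth_on U (\<lambda>x. poly p (complex_of_real x))"
  using smooth_on_poly_comp smooth_on_of_real by blast

lemma vderiv_1_poly:
  "vderiv 1 (\<lambda>x. poly p (complex_of_real x)) = (\<lambda>x. poly (pderiv p) (complex_of_real x))"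
proof
  fix x
  show "vderiv 1 (\<lambda>x. poly p (complex_of_real x)) x = poly (pderiv p) (complex_of_real x)"
    using vector_derivative_at[OF has_vector_derivative_real_field[OF poly_DERIV[of p "complex_of_real x"]]]
    by simp
qed

section \<open>Bounds on finitely many derivatives\<close>

text \<open>\<open>derivs_bounded k h M\<close> is the condition \<open>p\<^sub>k(h) \<le> M\<close>, stated pointwise so that it can be
  proved and combined without suprema.\<close>

definition derivs_bounded :: "nat \<Rightarrow> (real \<Rightarrow> complex) \<Rightarrow> real \<Rightarrow> bool" where
  "derivs_bounded k h M \<longleftrightarrow> (\<forall>j\<le>k. \<forall>t\<in>{-real k..real k}. norm (vderiv j h t) \<le> M)"

lemma seminorm_p_le: "derivs_bounded k h M \<Longrightarrow> seminorm_p k h \<le> M"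
  unfolding seminorm_p_def derivs_bounded_def by (intro cSUP_least) auto

lemma derivs_bounded_mono: "derivs_bounded k u A \<Longrightarrow> A \<le> B \<Longrightarrow> derivs_bounded k u B"
  unfolding derivs_bounded_def by force

lemma derivs_bounded_const: "derivs_bounded k (\<lambda>x. c) (norm c)"
  unfolding derivs_bounded_def by (simp add: vderiv_const)

lemma derivs_bounded_cong_open:
  assumes "derivs_bounded k g M" "\<And>x. x \<in> {-real k - 1<..<real k + 1} \<Longrightarrow> f x = g x"
  shows "derivs_bounded k f M"
  unfolding derivs_bounded_def
proof (intro allI impI ballI)
  fix j t assume "j \<le> k" "t \<in> {-real k..real k}"
  moreover have "vderiv j f t = vderiv j g t"
    by (rule vderiv_cong_open[of "{-real k - 1<..<real k + 1}"]) (use assms(2) \<open>t \<in> _\<close> in auto)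
  ultimately show "norm (vderiv j f t) \<le> M" using assms(1) unfolding derivs_bounded_def by simp
qed

lemma derivs_bounded_exists:
  assumes "smooth_on UNIV h"
  shows "\<exists>M. derivs_bounded k h M"
proof -
  have "bounded (vderiv j h ` {-real k..real k})" for j
    using smooth_on_imp_continuous_on[OF smooth_on_vderiv[OF assms]]
    by (intro compact_imp_bounded compact_continuous_image) auto
  then have "\<exists>M. \<forall>t\<in>{-real k..real k}. norm (vderiv j h t) \<le> M" for j
    by (auto simp: bounded_iff)
  then obtain M where M: "\<And>j t. t\<in>{-real k..real k} \<Longrightarrow> norm (vderiv j h t) \<le> M j"
    by metis
  have "norm (vderiv j h t) \<le> (\<Sum>j\<le>k. \<bar>M j\<bar>)" if "j \<le> k" "t\<in>{-real k..real k}" for j t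
  proof -
    have "norm (vderiv j h t) \<le> \<bar>M j\<bar>" using M[OF that(2), of j] by linarith
    also have "\<dots> \<le> (\<Sum>j\<le>k. \<bar>M j\<bar>)" using that(1) by (intro member_le_sum) auto
    finally show ?thesis .
  qed
  then show ?thesis unfolding derivs_bounded_def by blast
qed

lemma norm_vderiv_mult_le:
  fixes u v :: "real \<Rightarrow> complex"
  assumes "smooth_on UNIV u" "smooth_on UNIV v"
    and "\<And>i t. i \<le> j \<Longrightarrow> t \<in> I \<Longrightarrow> norm (vderiv i u t) \<le> A"
    and "\<And>i t. i \<le> j \<Longrightarrow> t \<in> I \<Longrightarrow> norm (vderiv i v t) \<le> B"
    and "t \<in> I"
  shows "norm (vderiv j (\<lambda>x. u x * v x) t) \<le> 2 ^ j * A * B"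
  using assms
proof (induction j arbitrary: u v)
  case 0
  have a: "norm (u t) \<le> A" and b: "norm (v t) \<le> B" using "0.prems"(3-5) by simp_all
  then have "0 \<le> A" using norm_ge_zero order_trans by blast
  then show ?case unfolding vderiv.simps(1) norm_mult using mult_mono[OF a b] by simp
next
  case (Suc j)
  have "\<And>y. u differentiable (at y)" "\<And>y. v differentiable (at y)"
    using smooth_on_differentiable[OF Suc.prems(1), of _ 0] smooth_on_differentiable[OF Suc.prems(2), of _ 0]
    by auto
  then have eq: "vderiv 1 (\<lambda>x. u x * v x) = (\<lambda>y. 1 * (u y * vderiv 1 v y) + 1 * (vderiv 1 u y * v y))"
    by (simp add: fun_eq_iff)
  have "smooth_on UNIV (\<lambda>y. u y * vderiv 1 v y)" "smooth_on UNIV (\<lambda>y. vderiv 1 u y * v y)"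
    using smooth_on_mult Suc.prems(1,2) smooth_on_vderiv_1 by blast+
  then have split: "vderiv (Suc j) (\<lambda>x. u x * v x) t =
      vderiv j (\<lambda>y. u y * vderiv 1 v y) t + vderiv j (\<lambda>y. vderiv 1 u y * v y) t"
    unfolding vderiv_Suc'[of j] eq using vderiv_lincomb[of UNIV j _ _ j t 1 1]
    unfolding smooth_on_def by simp
  have left: "norm (vderiv j (\<lambda>y. u y * vderiv 1 v y) t) \<le> 2 ^ j * A * B"
  proof (rule Suc.IH)
    show "smooth_on UNIV u" "smooth_on UNIV (vderiv 1 v)" using Suc.prems smooth_on_vderiv_1 by blast+
    show "\<And>i t. i \<le> j \<Longrightarrow> t \<in> I \<Longrightarrow> norm (vderiv i (vderiv 1 v) t) \<le> B"
      using Suc.prems(4) by (simp only: vderiv_Suc'[symmetric])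
  qed (use Suc.prems in auto)
  have right: "norm (vderiv j (\<lambda>y. vderiv 1 u y * v y) t) \<le> 2 ^ j * A * B"
  proof (rule Suc.IH)
    show "smooth_on UNIV (vderiv 1 u)" "smooth_on UNIV v" using Suc.prems smooth_on_vderiv_1 by blast+
    show "\<And>i t. i \<le> j \<Longrightarrow> t \<in> I \<Longrightarrow> norm (vderiv i (vderiv 1 u) t) \<le> A"
      using Suc.prems(3) by (simp only: vderiv_Suc'[symmetric])
  qed (use Suc.prems in auto)
  show ?case
    unfolding split using left right norm_triangle_ineq[of "vderiv j (\<lambda>y. u y * vderiv 1 v y) t"
        "vderiv j (\<lambda>y. vderiv 1 u y * v y) t"] by simp
qed

lemma derivs_bounded_mult:
  fixes u v :: "real \<Rightarrow> complex"
  assumes "smooth_on UNIV u" "smooth_on UNIV v" "derivs_bounded k u A" "derivs_bounded k v B"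
  shows "derivs_bounded k (\<lambda>x. u x * v x) (2 ^ k * A * B)"
  unfolding derivs_bounded_def
proof (intro allI impI ballI)
  fix j t assume j: "j \<le> k" and t: "t \<in> {-real k..real k}"
  have A: "0 \<le> A" and B: "0 \<le> B"
    using assms(3,4) t unfolding derivs_bounded_def by (meson le0 norm_ge_zero order_trans)+
  have "norm (vderiv j (\<lambda>x. u x * v x) t) \<le> 2 ^ j * A * B"
    using norm_vderiv_mult_le[OF assms(1,2), of j "{-real k..real k}" A B t] assms(3,4) j t
    unfolding derivs_bounded_def by auto
  also have "\<dots> \<le> 2 ^ k * A * B"
    using A B j by (intro mult_right_mono) (auto intro: power_increasing)
  finally show "norm (vderiv j (\<lambda>x. u x * v x) t) \<le> 2 ^ k * A * B" .
qed

lemma derivs_bounded_lincomb: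
  fixes u v :: "real \<Rightarrow> complex"
  assumes "smooth_on UNIV u" "smooth_on UNIV v" "derivs_bounded k u A" "derivs_bounded k v B"
  shows "derivs_bounded k (\<lambda>x. a * u x + b * v x) (norm a * A + norm b * B)"
  unfolding derivs_bounded_def
proof (intro allI impI ballI)
  fix j t assume j: "j \<le> k" and t: "t \<in> {-real k..real k}"
  have "vderiv j (\<lambda>x. a * u x + b * v x) t = a * vderiv j u t + b * vderiv j v t"
    using vderiv_lincomb[of UNIV j u v j t a b] assms(1,2) unfolding smooth_on_def by simp
  also have "norm \<dots> \<le> norm a * norm (vderiv j u t) + norm b * norm (vderiv j v t)"
    using norm_triangle_ineq[of "a * vderiv j u t" "b * vderiv j v t"] by (simp add: norm_mult)
  also have "\<dots> \<le> norm a * A + norm b * B"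
    using assms(3,4) j t unfolding derivs_bounded_def by (intro add_mono mult_left_mono) auto
  finally show "norm (vderiv j (\<lambda>x. a * u x + b * v x) t) \<le> norm a * A + norm b * B" .
qed

lemma derivs_bounded_add:
  "smooth_on UNIV u \<Longrightarrow> smooth_on UNIV v \<Longrightarrow> derivs_bounded k u A \<Longrightarrow> derivs_bounded k v B
    \<Longrightarrow> derivs_bounded k (\<lambda>x. u x + v x) (A + B)"
  using derivs_bounded_lincomb[of u v k A B 1 1] by simp
section \<open>A smooth bump function\<close>

text \<open>The functions \<open>s \<mapsto> Q(1/s) e\<^sup>-\<^sup>1\<^sup>/\<^sup>s\<close> (for \<open>s > 0\<close>, and \<open>0\<close> otherwise) are closed under
  differentiation, which is why all derivatives of \<open>e\<^sup>-\<^sup>1\<^sup>/\<^sup>s\<close> vanish at \<open>0\<close>.\<close>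

definition flat :: "real poly \<Rightarrow> real \<Rightarrow> real" where
  "flat Q s = (if s > 0 then poly Q (1/s) * exp (-1/s) else 0)"

definition flat_deriv_poly :: "real poly \<Rightarrow> real poly" where
  "flat_deriv_poly Q = [:0, 0, 1:] * (Q - pderiv Q)"

lemma tendsto_poly_times_exp_neg_at_top:
  fixes Q :: "real poly"
  shows "((\<lambda>u. poly Q u * exp (- u)) \<longlongrightarrow> 0) at_top"
proof -
  have "((\<lambda>u. \<Sum>i\<le>degree Q. coeff Q i * (u ^ i / exp u)) \<longlongrightarrow> (\<Sum>i\<le>degree Q. coeff Q i * 0)) at_top"
    by (intro tendsto_sum tendsto_mult tendsto_const tendsto_power_div_exp_0)
  moreover have "\<And>u. poly Q u * exp (-u) = (\<Sum>i\<le>degree Q. coeff Q i * (u^i / exp u))"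
    by (simp add: poly_altdef sum_distrib_right exp_minus divide_inverse mult.assoc)
  ultimately show ?thesis by simp
qed

lemma tendsto_poly_inverse_times_exp_at_right_0:
  fixes Q :: "real poly"
  shows "((\<lambda>x. poly Q (1/x) * exp (-1/x)) \<longlongrightarrow> 0) (at_right 0)"
  using filterlim_compose[OF tendsto_poly_times_exp_neg_at_top filterlim_inverse_at_top_right]
  by (simp add: divide_inverse)

lemma flat_has_real_derivative_pos:
  fixes Q :: "real poly"
  assumes "s > 0"
  shows "((\<lambda>s. poly Q (1/s) * exp (-1/s)) has_real_derivative (poly (flat_deriv_poly Q) (1/s) * exp (-1/s))) (at s)"
proof -
  have "((\<lambda>s. poly Q (1/s) * exp (-1/s)) has_real_derivative
      (poly (pderiv Q) (1/s) * (- 1 / s^2) * exp (-1/s) + poly Q (1/s) * (exp (-1/s) * (1/s^2)))) (at s)"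
    using assms
    by (auto intro!: derivative_eq_intros DERIV_chain2[OF poly_DERIV] simp: field_simps power2_eq_square)
  moreover have "poly (pderiv Q) (1/s) * (- 1 / s^2) * exp (-1/s) + poly Q (1/s) * (exp (-1/s) * (1/s^2))
      = poly (flat_deriv_poly Q) (1/s) * exp (-1/s)"
    by (simp add: flat_deriv_poly_def algebra_simps power2_eq_square)
  ultimately show ?thesis by simp
qed

lemma flat_has_real_derivative_0: "(flat Q has_real_derivative 0) (at 0)"
proof -
  have "((\<lambda>y. (flat Q y - flat Q 0) / (y - 0)) \<longlongrightarrow> 0) (at 0)"
  proof (rule filterlim_split_at)
    show "((\<lambda>y. (flat Q y - flat Q 0) / (y - 0)) \<longlongrightarrow> 0) (at_left 0)"
      by (rule tendsto_eventually) (auto simp: flat_def eventually_at_left_field intro!: exI[of _ "-1"])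
    show "((\<lambda>y. (flat Q y - flat Q 0) / (y - 0)) \<longlongrightarrow> 0) (at_right 0)"
    proof (rule Lim_transform_eventually[OF tendsto_poly_inverse_times_exp_at_right_0[of "pCons 0 Q"]])
      show "\<forall>\<^sub>F x in at_right 0. poly (pCons 0 Q) (1 / x) * exp (- 1 / x) = (flat Q x - flat Q 0) / (x - 0)"
        by (auto simp: flat_def eventually_at_right_field intro!: exI[of _ 1])
    qed
  qed
  then show ?thesis by (simp add: has_field_derivative_iff)
qed

lemma flat_has_real_derivative: "(flat Q has_real_derivative flat (flat_deriv_poly Q) s) (at s)"
proof (cases s "0 :: real" rule: linorder_cases)
  case less
  have "((\<lambda>s. 0) has_real_derivative flat (flat_deriv_poly Q) s) (at s)"
    using less by (simp add: flat_def)
  then show ?thesis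
    by (rule has_field_derivative_transform_within_open[of _ _ _ "{..<0}"]) (use less in \<open>auto simp: flat_def\<close>)
next
  case equal
  then show ?thesis using flat_has_real_derivative_0 by (simp add: flat_def)
next
  case greater
  have "((\<lambda>s. poly Q (1/s) * exp (-1/s)) has_real_derivative flat (flat_deriv_poly Q) s) (at s)"
    using flat_has_real_derivative_pos[OF greater] greater by (simp add: flat_def)
  then show ?thesis
    by (rule has_field_derivative_transform_within_open[of _ _ _ "{0<..}"]) (use greater in \<open>auto simp: flat_def\<close>)
qed

definition cflat :: "real poly \<Rightarrow> real \<Rightarrow> complex" where
  "cflat Q s = complex_of_real (flat Q s)"

lemma has_vector_derivative_cflat: "(cflat Q has_vector_derivative cflat (flat_deriv_poly Q) s) (at s)"
  unfolding cflat_def[abs_def] by (rule has_vector_derivative_of_real[OF flat_has_real_derivative])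

lemma vderiv_cflat: "vderiv i (cflat Q) = cflat ((flat_deriv_poly ^^ i) Q)"
proof (induction i arbitrary: Q)
  case (Suc i)
  have "vderiv 1 (cflat Q) = cflat (flat_deriv_poly Q)"
    using vector_derivative_at[OF has_vector_derivative_cflat] by (simp add: fun_eq_iff)
  then show ?case using Suc by (simp only: vderiv_Suc'[of i] funpow_Suc_right o_apply)
qed simp

lemma smooth_on_cflat: "smooth_on U (cflat Q)"
  unfolding smooth_on_def smooth_upto_def vderiv_cflat
  using has_vector_derivative_cflat differentiableI_vector by blast

lemma flat_1_pos: "s > 0 \<Longrightarrow> flat 1 s > 0"
  by (simp add: flat_def)

lemma flat_nonpos: "s \<le> 0 \<Longrightarrow> flat Q s = 0"
  by (simp add: flat_def)

definition smooth_step :: "real \<Rightarrow> complex" where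
  "smooth_step s = cflat 1 s * inverse (cflat 1 s + cflat 1 (1 - s))"

lemma smooth_step_denominator_nonzero: "cflat 1 s + cflat 1 (1 - s) \<noteq> 0"
proof -
  have "flat 1 s + flat 1 (1 - s) > 0"
    using flat_1_pos[of s] flat_1_pos[of "1 - s"] flat_nonpos[of s 1] flat_nonpos[of "1 - s" 1]
    by (cases "s > 0"; cases "1 - s > 0") auto
  then have "flat 1 s + flat 1 (1 - s) \<noteq> 0" by simp
  then show ?thesis unfolding cflat_def of_real_add[symmetric] of_real_eq_0_iff .
qed

lemma smooth_on_smooth_step: "smooth_on UNIV smooth_step"
proof -
  have "smooth_on UNIV (\<lambda>s. cflat 1 (-1 * s + 1))"
    by (rule smooth_on_affine[OF smooth_on_cflat])
  then have "smooth_on UNIV (\<lambda>s. cflat 1 s + cflat 1 (1 - s))"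
    using smooth_on_add[OF _ smooth_on_cflat] by simp
  then have "smooth_on UNIV (\<lambda>s. inverse (cflat 1 s + cflat 1 (1 - s)))"
    using smooth_step_denominator_nonzero
    by (intro smooth_on_holomorphic_comp[of UNIV "-{0}" inverse]) (auto intro: holomorphic_intros)
  then show ?thesis
    unfolding smooth_step_def[abs_def] using smooth_on_mult[OF _ smooth_on_cflat] by simp
qed

lemma smooth_step_eq_0: "s \<le> 0 \<Longrightarrow> smooth_step s = 0"
  by (simp add: smooth_step_def cflat_def flat_nonpos)

lemma smooth_step_eq_1: "s \<ge> 1 \<Longrightarrow> smooth_step s = 1"
  using flat_1_pos[of s] by (simp add: smooth_step_def cflat_def flat_nonpos)

definition bump :: "real \<Rightarrow> complex" where
  "bump x = smooth_step (2 - x) * smooth_step (x + 2)"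

lemma smooth_on_bump: "smooth_on UNIV bump"
proof -
  have "smooth_on UNIV (\<lambda>x. smooth_step (-1 * x + 2))" "smooth_on UNIV (\<lambda>x. smooth_step (1 * x + 2))"
    by (intro smooth_on_affine smooth_on_smooth_step)+
  then show ?thesis unfolding bump_def[abs_def] using smooth_on_mult by simp
qed

lemma bump_eq_1: "\<bar>x\<bar> \<le> 1 \<Longrightarrow> bump x = 1"
  by (simp add: bump_def smooth_step_eq_1)

lemma bump_eq_0: "\<bar>x\<bar> \<ge> 2 \<Longrightarrow> bump x = 0"
  by (auto simp: bump_def smooth_step_eq_0 abs_if split: if_splits)

lemma smooth_on_bump_scaled: "smooth_on UNIV (\<lambda>x. bump (x / m))"
  using smooth_on_affine[OF smooth_on_bump, of "1/m" 0] by simp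

lemma smooth_on_cutoff:
  fixes h :: "real \<Rightarrow> complex"
  assumes h: "smooth_on {-K<..<K} h" and m: "m > 0" "2 * m < K"
  shows "smooth_on UNIV (\<lambda>x. bump (x / m) * h x)"
proof (rule smooth_on_locally)
  fix x :: real
  show "\<exists>U g. open U \<and> x \<in> U \<and> smooth_on U g \<and> (\<forall>y\<in>U. bump (y / m) * h y = g y)"
  proof (cases "\<bar>x\<bar> < K")
    case True
    have "smooth_on {-K<..<K} (\<lambda>x. bump (x / m) * h x)"
      using smooth_on_subset[OF smooth_on_bump_scaled] by (intro smooth_on_mult[OF _ _ h]) auto
    then show ?thesis
      using True by (intro exI[of _ "{-K<..<K}"] exI[of _ "\<lambda>x. bump (x / m) * h x"]) auto
  next
    case False
    have "bump (y / m) * h y = 0" if "2 * m < \<bar>y\<bar>" for y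
    proof -
      have "\<bar>y / m\<bar> \<ge> 2" using that m(1) by (simp add: abs_divide field_simps)
      then show ?thesis by (simp add: bump_eq_0)
    qed
    moreover have "open {y. 2 * m < \<bar>y\<bar>}" by (intro open_Collect_less continuous_intros)
    ultimately show ?thesis
      using False m(2) smooth_on_const by (intro exI[of _ "{y. 2 * m < \<bar>y\<bar>}"] exI[of _ "\<lambda>y. 0"]) auto
  qed
qed
section \<open>Approximation by polynomials with Gaussian-rational coefficients\<close>

definition gauss_rats :: "complex set" where
  "gauss_rats = {c. Re c \<in> \<rat> \<and> Im c \<in> \<rat>}"

lemma gauss_rats_add: "a \<in> gauss_rats \<Longrightarrow> b \<in> gauss_rats \<Longrightarrow> a + b \<in> gauss_rats"
  and gauss_rats_diff: "a \<in> gauss_rats \<Longrightarrow> b \<in> gauss_rats \<Longrightarrow> a - b \<in> gauss_rats"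
  and gauss_rats_mult: "a \<in> gauss_rats \<Longrightarrow> b \<in> gauss_rats \<Longrightarrow> a * b \<in> gauss_rats"
  and gauss_rats_of_nat: "of_nat n \<in> gauss_rats"
  and gauss_rats_div_of_nat: "a \<in> gauss_rats \<Longrightarrow> a / of_nat n \<in> gauss_rats"
  by (auto simp: gauss_rats_def Re_divide Im_divide)

lemma gauss_rats_0: "0 \<in> gauss_rats"
  using gauss_rats_of_nat[of 0] by simp

lemma gauss_rats_1: "1 \<in> gauss_rats"
  using gauss_rats_of_nat[of 1] by simp

lemma gauss_rats_sum: "(\<And>i. i \<in> A \<Longrightarrow> f i \<in> gauss_rats) \<Longrightarrow> sum f A \<in> gauss_rats"
  by (induction A rule: infinite_finite_induct) (auto intro: gauss_rats_add gauss_rats_0)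

lemma gauss_rats_dense: "e > 0 \<Longrightarrow> \<exists>r\<in>gauss_rats. norm (r - c) \<le> e"
proof -
  assume e: "e > 0"
  obtain a where a: "a \<in> \<rat>" "Re c < a" "a < Re c + e/2"
    using Rats_dense_in_real[of "Re c" "Re c + e/2"] e by auto
  obtain b where b: "b \<in> \<rat>" "Im c < b" "b < Im c + e/2"
    using Rats_dense_in_real[of "Im c" "Im c + e/2"] e by auto
  have "Complex a b \<in> gauss_rats" using a b by (simp add: gauss_rats_def)
  moreover have "norm (Complex a b - c) \<le> e"
    using cmod_le[of "Complex a b - c"] a b by simp
  ultimately show ?thesis by blast
qed

definition gauss_rat_poly :: "complex poly \<Rightarrow> bool" where
  "gauss_rat_poly p \<longleftrightarrow> (\<forall>i. coeff p i \<in> gauss_rats)"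

lemma gauss_rat_poly_pCons: "c \<in> gauss_rats \<Longrightarrow> gauss_rat_poly p \<Longrightarrow> gauss_rat_poly (pCons c p)"
  by (auto simp: gauss_rat_poly_def coeff_pCons split: nat.splits)

lemma gauss_rat_poly_0: "gauss_rat_poly 0"
  and gauss_rat_poly_1: "gauss_rat_poly 1"
  by (auto simp: gauss_rat_poly_def gauss_rats_0 gauss_rats_1 coeff_1)

lemma gauss_rat_poly_const: "c \<in> gauss_rats \<Longrightarrow> gauss_rat_poly [:c:]"
  by (intro gauss_rat_poly_pCons gauss_rat_poly_0)

lemma gauss_rat_poly_add: "gauss_rat_poly p \<Longrightarrow> gauss_rat_poly q \<Longrightarrow> gauss_rat_poly (p + q)"
  and gauss_rat_poly_diff: "gauss_rat_poly p \<Longrightarrow> gauss_rat_poly q \<Longrightarrow> gauss_rat_poly (p - q)"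
  and gauss_rat_poly_smult: "c \<in> gauss_rats \<Longrightarrow> gauss_rat_poly p \<Longrightarrow> gauss_rat_poly (smult c p)"
  and gauss_rat_poly_monom: "c \<in> gauss_rats \<Longrightarrow> gauss_rat_poly (monom c n)"
  by (simp_all add: gauss_rat_poly_def gauss_rats_add gauss_rats_diff gauss_rats_mult coeff_monom gauss_rats_0)

lemma gauss_rat_poly_mult: "gauss_rat_poly p \<Longrightarrow> gauss_rat_poly q \<Longrightarrow> gauss_rat_poly (p * q)"
  unfolding gauss_rat_poly_def coeff_mult by (auto intro!: gauss_rats_sum gauss_rats_mult)

lemma gauss_rat_poly_sum: "(\<And>i. i \<in> A \<Longrightarrow> gauss_rat_poly (f i)) \<Longrightarrow> gauss_rat_poly (sum f A)"
  by (induction A rule: infinite_finite_induct) (auto intro: gauss_rat_poly_add gauss_rat_poly_0)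

lemma gauss_rat_poly_power: "gauss_rat_poly p \<Longrightarrow> gauss_rat_poly (p ^ n)"
  by (induction n) (auto intro: gauss_rat_poly_mult gauss_rat_poly_1)

definition poly_antideriv :: "complex poly \<Rightarrow> complex poly" where
  "poly_antideriv p = (\<Sum>i\<le>degree p. monom (coeff p i / of_nat (Suc i)) (Suc i))"

lemma pderiv_poly_antideriv: "pderiv (poly_antideriv p) = p"
proof -
  have pderiv_sum: "pderiv (sum f A) = (\<Sum>x\<in>A. pderiv (f x))" for f :: "nat \<Rightarrow> complex poly" and A
    using higher_pderiv_sum[of 1 f A] by simp
  have "pderiv (poly_antideriv p) = (\<Sum>i\<le>degree p. monom (coeff p i) i)"
    unfolding poly_antideriv_def pderiv_sum pderiv_monom by (intro sum.cong refl) (simp del: of_nat_Suc)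
  then show ?thesis by (simp add: poly_as_sum_of_monoms)
qed

lemma poly_antideriv_at_0: "poly (poly_antideriv p) 0 = 0"
  by (simp add: poly_antideriv_def poly_monom poly_sum)

lemma gauss_rat_poly_antideriv: "gauss_rat_poly p \<Longrightarrow> gauss_rat_poly (poly_antideriv p)"
  unfolding poly_antideriv_def
  by (intro gauss_rat_poly_sum gauss_rat_poly_monom gauss_rats_div_of_nat) (simp add: gauss_rat_poly_def)

lemma norm_diff_le_vector_derivative_bound:
  fixes F :: "real \<Rightarrow> complex"
  assumes "\<And>x. x \<in> {a..b} \<Longrightarrow> (F has_vector_derivative D x) (at x)"
    and "\<And>x. x \<in> {a..b} \<Longrightarrow> norm (D x) \<le> B"
    and "x \<in> {a..b}" "y \<in> {a..b}"
  shows "norm (F x - F y) \<le> B * \<bar>x - y\<bar>"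
proof -
  have "norm (F x - F y) \<le> B * norm (x - y)"
  proof (rule differentiable_bound[of "{a..b}" F "\<lambda>x h. h *\<^sub>R D x"])
    show "(F has_derivative (\<lambda>h. h *\<^sub>R D x)) (at x within {a..b})" if "x \<in> {a..b}" for x
      using assms(1)[OF that] unfolding has_vector_derivative_def by (rule has_derivative_at_withinI)
    show "onorm (\<lambda>h. h *\<^sub>R D x) \<le> B" if "x \<in> {a..b}" for x
      using onorm_scaleR_left[OF bounded_linear_ident, of "D x"] onorm_id[where 'a=real] assms(2)[OF that]
      by simp
  qed (use assms in auto)
  then show ?thesis by simp
qed

lemma complex_Bernstein_Weierstrass:
  fixes g :: "real \<Rightarrow> complex"
  assumes "continuous_on {0..1} g" "e > 0"
  shows "\<exists>n. \<forall>s\<in>{0..1}. norm ((\<Sum>i\<le>n. g (i/n) * of_real (Bernstein n i s)) - g s) \<le> e"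
proof -
  have c1: "continuous_on {0..1} (\<lambda>s. Re (g s))" and c2: "continuous_on {0..1} (\<lambda>s. Im (g s))"
    by (intro continuous_intros assms(1))+
  obtain N1 where N1: "\<And>n x. N1 \<le> n \<and> x \<in> {0..1} \<Longrightarrow>
      \<bar>Re (g x) - (\<Sum>k\<le>n. Re (g (k/n)) * Bernstein n k x)\<bar> < e/2"
    using Bernstein_Weierstrass[OF c1, of "e/2"] assms(2) by auto
  obtain N2 where N2: "\<And>n x. N2 \<le> n \<and> x \<in> {0..1} \<Longrightarrow>
      \<bar>Im (g x) - (\<Sum>k\<le>n. Im (g (k/n)) * Bernstein n k x)\<bar> < e/2"
    using Bernstein_Weierstrass[OF c2, of "e/2"] assms(2) by auto
  define n where "n = max N1 N2"
  have "norm ((\<Sum>i\<le>n. g (i/n) * of_real (Bernstein n i s)) - g s) \<le> e" if s: "s \<in> {0..1}" for s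
  proof -
    have "norm ((\<Sum>i\<le>n. g (i/n) * of_real (Bernstein n i s)) - g s) \<le>
        \<bar>Re ((\<Sum>i\<le>n. g (i/n) * of_real (Bernstein n i s)) - g s)\<bar> +
        \<bar>Im ((\<Sum>i\<le>n. g (i/n) * of_real (Bernstein n i s)) - g s)\<bar>"
      by (rule cmod_le)
    also have "\<dots> \<le> e/2 + e/2"
      using N1[of n s] N2[of n s] s by (simp add: n_def Re_sum Im_sum abs_minus_commute)
    finally show ?thesis by simp
  qed
  then show ?thesis by blast
qed

lemma gauss_rat_Bernstein_approx:
  fixes g :: "real \<Rightarrow> complex"
  assumes "continuous_on {0..1} g" "e > 0"
  shows "\<exists>n r. (\<forall>i. r i \<in> gauss_rats) \<and>
    (\<forall>s\<in>{0..1}. norm ((\<Sum>i\<le>n. r i * of_real (Bernstein n i s)) - g s) \<le> e)"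
proof -
  have "\<exists>n. \<forall>s\<in>{0..1}. norm ((\<Sum>i\<le>n. g (i/n) * of_real (Bernstein n i s)) - g s) \<le> e/2"
    by (rule complex_Bernstein_Weierstrass) (use assms in simp_all)
  then obtain n where n: "\<And>s. s \<in> {0..1} \<Longrightarrow>
      norm ((\<Sum>i\<le>n. g (i/n) * of_real (Bernstein n i s)) - g s) \<le> e/2"
    by blast
  have "\<forall>i::nat. \<exists>r\<in>gauss_rats. norm (r - g (i/n)) \<le> e/2"
  proof
    fix i :: nat
    show "\<exists>r\<in>gauss_rats. norm (r - g (i/n)) \<le> e/2" using gauss_rats_dense[of "e/2" "g (i/n)"] assms(2) by simp
  qed
  then obtain r where r: "\<And>i::nat. r i \<in> gauss_rats" "\<And>i::nat. norm (r i - g (i/n)) \<le> e/2"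
    by metis
  have approx: "norm ((\<Sum>i\<le>n. r i * of_real (Bernstein n i s)) - g s) \<le> e" if s: "s \<in> {0..1}" for s
  proof -
    have "norm ((\<Sum>i\<le>n. r i * of_real (Bernstein n i s)) - g s) \<le>
        norm (\<Sum>i\<le>n. (r i - g (i/n)) * of_real (Bernstein n i s)) +
        norm ((\<Sum>i\<le>n. g (i/n) * of_real (Bernstein n i s)) - g s)"
      by (rule order_trans[OF _ norm_triangle_ineq]) (simp add: algebra_simps sum_subtractf)
    also have "norm (\<Sum>i\<le>n. (r i - g (i/n)) * of_real (Bernstein n i s)) \<le> (\<Sum>i\<le>n. e/2 * Bernstein n i s)"
    proof (rule order_trans[OF norm_sum sum_mono])
      fix i assume "i \<in> {..n}"
      have "0 \<le> Bernstein n i s" using Bernstein_nonneg[of s n] s by auto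
      then show "norm ((r i - g (i/n)) * of_real (Bernstein n i s)) \<le> e/2 * Bernstein n i s"
        unfolding norm_mult using mult_right_mono[OF r(2)[of i]] by simp
    qed
    also have "(\<Sum>i\<le>n. e/2 * Bernstein n i s) = e/2 * (\<Sum>i\<le>n. Bernstein n i s)"
      by (rule sum_distrib_left[symmetric])
    also have "\<dots> = e/2" by simp
    finally show ?thesis using n[OF s] by simp
  qed
  then show ?thesis using r(1) by blast
qed

lemma gauss_rat_poly_uniform_approx:
  fixes h :: "real \<Rightarrow> complex"
  assumes cont: "continuous_on {-L..L} h" and L: "L > 0" "L \<in> \<rat>" and e: "e > 0"
  shows "\<exists>p. gauss_rat_poly p \<and> (\<forall>x\<in>{-L..L}. norm (poly p (of_real x) - h x) \<le> e)"
proof -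
  define g where "g s = h (-L + 2 * L * s)" for s
  have "(\<lambda>s. -L + 2 * L * s) ` {0..1} \<subseteq> {-L..L}"
    using L by (auto simp: mult_left_le)
  then have "continuous_on {0..1} g"
    unfolding g_def by (rule continuous_on_compose2[OF cont, rotated]) (auto intro!: continuous_intros)
  then obtain n r where r: "\<And>i. r i \<in> gauss_rats"
    and approx: "\<And>s. s \<in> {0..1} \<Longrightarrow> norm ((\<Sum>i\<le>n. r i * of_real (Bernstein n i s)) - g s) \<le> e"
    using gauss_rat_Bernstein_approx[OF _ e] by meson
  text \<open>Transport the Bernstein polynomials to \<open>[-L, L]\<close> by \<open>S(x) = (x + L) / 2L\<close>.\<close>
  define S :: "complex poly" where "S = [:1/2, 1/(2 * of_real L):]"
  define P where "P = (\<Sum>i\<le>n. smult (r i * of_nat (n choose i)) (S ^ i * (1 - S) ^ (n - i)))"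
  have "gauss_rat_poly S"
    unfolding S_def by (intro gauss_rat_poly_pCons gauss_rat_poly_0) (auto simp: gauss_rats_def L Re_divide Im_divide)
  then have "gauss_rat_poly P" unfolding P_def
    by (intro gauss_rat_poly_sum gauss_rat_poly_smult gauss_rat_poly_mult gauss_rat_poly_power
        gauss_rat_poly_diff gauss_rat_poly_1 gauss_rats_mult gauss_rats_of_nat r)
  moreover have "norm (poly P (of_real x) - h x) \<le> e" if x: "x \<in> {-L..L}" for x
  proof -
    define s where "s = (x + L) / (2 * L)"
    have s01: "s \<in> {0..1}" using x L by (auto simp: s_def field_simps)
    have "poly S (of_real x) = of_real s"
      using L by (simp add: S_def s_def field_simps)
    then have "poly P (of_real x) = (\<Sum>i\<le>n. r i * of_real (Bernstein n i s))"
      by (simp add: P_def poly_sum Bernstein_def mult.assoc)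
    moreover have "h x = g s" using L by (simp add: g_def s_def field_simps)
    ultimately show ?thesis using approx[OF s01] by simp
  qed
  ultimately show ?thesis by blast
qed

lemma antideriv_approx_derivs:
  fixes q :: "complex poly"
  assumes w: "smooth_on UNIV w" and L: "L \<ge> 0"
    and q: "\<And>j t. j \<le> m \<Longrightarrow> t \<in> {-L..L} \<Longrightarrow>
      norm (vderiv j (\<lambda>x. poly q (of_real x) - vderiv 1 w x) t) \<le> \<eta>"
    and r: "norm (r - w 0) \<le> \<epsilon>"
    and j: "j \<le> Suc m" and t: "t \<in> {-L..L}"
  shows "norm (vderiv j (\<lambda>x. poly ([:r:] + poly_antideriv q) (of_real x) - w x) t) \<le> max \<eta> (\<eta> * L + \<epsilon>)"
proof -
  define P where "P = [:r:] + poly_antideriv q"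
  define F where "F x = poly P (of_real x) - w x" for x
  have sF: "smooth_on UNIV F"
    unfolding F_def[abs_def] by (intro smooth_on_diff smooth_on_poly w) auto
  have dF: "vderiv 1 F = (\<lambda>x. poly q (of_real x) - vderiv 1 w x)"
  proof
    fix x
    have "vderiv 1 F x = vderiv 1 (\<lambda>x. poly P (of_real x)) x - vderiv 1 w x"
      unfolding F_def[abs_def]
      using vderiv_lincomb[of UNIV 0 "\<lambda>x. poly P (of_real x)" w 1 x 1 "-1"]
        smooth_on_poly[of UNIV P] w unfolding smooth_on_def by simp
    moreover have "pderiv P = q" by (simp add: P_def pderiv_add pderiv_poly_antideriv)
    ultimately show "vderiv 1 F x = poly q (of_real x) - vderiv 1 w x"
      by (simp only: vderiv_1_poly)
  qed
  have "norm (vderiv j F t) \<le> max \<eta> (\<eta> * L + \<epsilon>)"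
  proof (cases j)
    case (Suc j')
    then have "vderiv j F t = vderiv j' (\<lambda>x. poly q (of_real x) - vderiv 1 w x) t"
      by (simp only: vderiv_Suc' dF)
    then show ?thesis using q[of j' t] Suc j t by simp
  next
    case 0
    have "(F has_vector_derivative vderiv 1 F x) (at x)" for x
      using vector_derivative_works[THEN iffD1, OF smooth_on_differentiable[OF sF, of x 0]] by simp
    moreover have "norm (vderiv 1 F x) \<le> \<eta>" if "x \<in> {-L..L}" for x
      using q[of 0 x] that dF by (auto simp: fun_eq_iff)
    ultimately have "norm (F t - F 0) \<le> \<eta> * \<bar>t - 0\<bar>"
      using t L by (intro norm_diff_le_vector_derivative_bound) auto
    also have "\<dots> \<le> \<eta> * L"
      using t q[of 0 0] L by (intro mult_left_mono) (auto intro: order_trans[OF norm_ge_zero])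
    finally have "norm (F t - F 0) \<le> \<eta> * L" .
    moreover have "F 0 = r - w 0" by (simp add: F_def P_def poly_antideriv_at_0)
    ultimately show ?thesis using r norm_triangle_ineq[of "F t - F 0" "F 0"] 0 by simp
  qed
  then show ?thesis unfolding F_def P_def .
qed

text \<open>The \<open>C\<^sup>m\<close> approximation is obtained by integrating a \<open>C\<^sup>m\<^sup>-\<^sup>1\<close> approximation of \<open>w'\<close>.\<close>

lemma gauss_rat_poly_approx_derivs:
  assumes L: "L > 0" "L \<in> \<rat>" and w: "smooth_on UNIV w" and \<delta>: "\<delta> > 0"
  shows "\<exists>p. gauss_rat_poly p \<and>
     (\<forall>j\<le>m. \<forall>t\<in>{-L..L}. norm (vderiv j (\<lambda>x. poly p (of_real x) - w x) t) \<le> \<delta>)"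
  using w \<delta>
proof (induction m arbitrary: w \<delta>)
  case 0
  then obtain p where "gauss_rat_poly p" "\<forall>x\<in>{-L..L}. norm (poly p (of_real x) - w x) \<le> \<delta>"
    using gauss_rat_poly_uniform_approx[OF smooth_on_imp_continuous_on L] by blast
  then show ?case by auto
next
  case (Suc m)
  define \<eta> where "\<eta> = \<delta> / (2 * (L + 1))"
  have \<eta>: "\<eta> > 0" "max \<eta> (\<eta> * L + \<delta> / 2) \<le> \<delta>"
    using Suc.prems L by (simp_all add: \<eta>_def field_simps)
  obtain q where q: "gauss_rat_poly q" "\<forall>j\<le>m. \<forall>t\<in>{-L..L}.
      norm (vderiv j (\<lambda>x. poly q (of_real x) - vderiv 1 w x) t) \<le> \<eta>"
    using Suc.IH[OF smooth_on_vderiv_1[OF Suc.prems(1)] \<eta>(1)] by blast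
  obtain r where r: "r \<in> gauss_rats" "norm (r - w 0) \<le> \<delta>/2"
    using gauss_rats_dense[of "\<delta>/2" "w 0"] Suc.prems by auto
  have "gauss_rat_poly ([:r:] + poly_antideriv q)"
    by (intro gauss_rat_poly_add gauss_rat_poly_const r gauss_rat_poly_antideriv q)
  moreover have "norm (vderiv j (\<lambda>x. poly ([:r:] + poly_antideriv q) (of_real x) - w x) t) \<le> \<delta>"
    if "j \<le> Suc m" "t \<in> {-L..L}" for j t
    using order_trans[OF antideriv_approx_derivs[OF Suc.prems(1) less_imp_le[OF L(1)] q(2)[rule_format] r(2) that]
        \<eta>(2)] .
  ultimately show ?case by blast
qed

lemma gauss_rat_poly_approx:
  assumes "smooth_on UNIV w" "\<delta> > 0"
  shows "\<exists>p. gauss_rat_poly p \<and> derivs_bounded k (\<lambda>x. poly p (of_real x) - w x) \<delta>"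
proof -
  obtain p where "gauss_rat_poly p"
    "\<forall>j\<le>k. \<forall>t\<in>{-(real k + 1)..real k + 1}. norm (vderiv j (\<lambda>x. poly p (of_real x) - w x) t) \<le> \<delta>"
    using gauss_rat_poly_approx_derivs[of "real k + 1" w \<delta> k] assms by auto
  then show ?thesis unfolding derivs_bounded_def by auto
qed
section \<open>A hypercyclic vector for translations\<close>

definition poly_of_rat_pairs :: "(rat \<times> rat) list \<Rightarrow> complex poly" where
  "poly_of_rat_pairs cs = Poly (map (\<lambda>(a, b). Complex (of_rat a) (of_rat b)) cs)"

lemma gauss_rat_poly_eq_poly_of_rat_pairs:
  assumes "gauss_rat_poly p"
  shows "\<exists>cs. poly_of_rat_pairs cs = p"
proof -
  let ?C = "\<lambda>(a, b). Complex (of_rat a) (of_rat b)"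
  have "\<forall>c\<in>set (coeffs p). \<exists>ab. ?C ab = c"
  proof
    fix c assume "c \<in> set (coeffs p)"
    then have "c \<in> gauss_rats"
      using assms by (auto simp: gauss_rat_poly_def coeffs_def split: if_splits)
    then obtain a b where "Re c = of_rat a" "Im c = of_rat b" unfolding gauss_rats_def Rats_def by auto
    then show "\<exists>ab. ?C ab = c" by (intro exI[of _ "(a, b)"]) (simp add: complex_eq_iff)
  qed
  then obtain h where h: "\<forall>c\<in>set (coeffs p). ?C (h c) = c"
    by (rule bchoice[THEN exE]) blast
  have "map ?C (map h (coeffs p)) = coeffs p"
    using h by (simp add: map_idI)
  then have "poly_of_rat_pairs (map h (coeffs p)) = p" by (simp add: poly_of_rat_pairs_def)
  then show ?thesis by blast
qed

text \<open>
  The \<open>i\<close>-th block is the cut-off polynomial coded by \<open>i\<close>, supported in \<open>[-2m\<^sub>i, 2m\<^sub>i]\<close>;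
  it is placed at \<open>block_centre i = n\<^sub>i a\<close> with \<open>n\<^sub>i\<close> so spread out that the regions
  \<open>|x - n\<^sub>i a| < N\<^sub>i |a|\<close> are disjoint, and \<open>universal_fun\<close> is their sum.
\<close>

context
  fixes a :: real
  assumes a: "a \<noteq> 0"
begin

definition block_code :: "nat \<Rightarrow> nat \<times> (rat \<times> rat) list" where
  "block_code i = from_nat i"

definition block_size :: "nat \<Rightarrow> nat" where
  "block_size i = Suc (fst (block_code i))"

definition block_poly :: "nat \<Rightarrow> complex poly" where
  "block_poly i = poly_of_rat_pairs (snd (block_code i))"

definition block :: "nat \<Rightarrow> real \<Rightarrow> complex" where
  "block i x = bump (x / real (block_size i)) * poly (block_poly i) (of_real x)"

definition block_steps :: "nat \<Rightarrow> nat" where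
  "block_steps i = nat \<lceil>(2 * real (block_size i) + 2) / \<bar>a\<bar>\<rceil> + 1"

definition block_shift :: "nat \<Rightarrow> nat" where
  "block_shift i = (\<Sum>l<i. 2 * block_steps l) + block_steps i"

definition block_centre :: "nat \<Rightarrow> real" where
  "block_centre i = real (block_shift i) * a"

definition block_radius :: "nat \<Rightarrow> real" where
  "block_radius i = real (block_steps i) * \<bar>a\<bar>"

definition universal_fun :: "real \<Rightarrow> complex" where
  "universal_fun x =
    (if \<exists>i. \<bar>x - block_centre i\<bar> < block_radius i
     then (let i = SOME i. \<bar>x - block_centre i\<bar> < block_radius i in block i (x - block_centre i))
     else 0)"

lemma block_radius_ge: "block_radius i \<ge> 2 * real (block_size i) + 2"
proof -
  have "real (block_steps i) \<ge> (2 * real (block_size i) + 2) / \<bar>a\<bar>"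
    unfolding block_steps_def by linarith
  then show ?thesis using a by (simp add: block_radius_def field_simps)
qed

lemma smooth_on_block: "smooth_on UNIV (block i)"
  unfolding block_def[abs_def]
  using smooth_on_mult[OF _ smooth_on_bump_scaled smooth_on_poly] by blast

lemma block_eq_0: "\<bar>x\<bar> \<ge> 2 * real (block_size i) \<Longrightarrow> block i x = 0"
  unfolding block_def using bump_eq_0[of "x / real (block_size i)"]
  by (simp add: block_size_def field_simps abs_divide)

lemma block_eq_poly: "\<bar>x\<bar> \<le> real (block_size i) \<Longrightarrow> block i x = poly (block_poly i) (of_real x)"
  unfolding block_def using bump_eq_1[of "x / real (block_size i)"]
  by (simp add: block_size_def field_simps abs_divide)

lemma block_shift_gap:
  assumes "i < j"
  shows "real (block_shift j) - real (block_shift i) \<ge> real (block_steps i) + real (block_steps j)"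
proof -
  have "(\<Sum>l<j. 2 * block_steps l) = (\<Sum>l<i. 2 * block_steps l) + (\<Sum>l\<in>{i..<j}. 2 * block_steps l)"
    using assms by (metis less_imp_le_nat sum.atLeastLessThan_concat lessThan_atLeast0 zero_le)
  moreover have "(\<Sum>l\<in>{i..<j}. 2 * block_steps l) \<ge> 2 * block_steps i"
    using assms by (intro member_le_sum) auto
  ultimately show ?thesis unfolding block_shift_def by linarith
qed

lemma block_regions_disjoint:
  assumes "\<bar>x - block_centre i\<bar> < block_radius i" "\<bar>x - block_centre j\<bar> < block_radius j"
  shows "i = j"
proof (rule ccontr)
  assume "i \<noteq> j"
  then have "\<bar>real (block_shift i) - real (block_shift j)\<bar> \<ge> real (block_steps i) + real (block_steps j)"
    using block_shift_gap[of i j] block_shift_gap[of j i] by (cases "i < j") auto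
  then have "(real (block_steps i) + real (block_steps j)) * \<bar>a\<bar> \<le>
      \<bar>real (block_shift i) - real (block_shift j)\<bar> * \<bar>a\<bar>"
    by (intro mult_right_mono) auto
  then have "\<bar>real (block_shift i) - real (block_shift j)\<bar> * \<bar>a\<bar> \<ge> block_radius i + block_radius j"
    by (simp add: block_radius_def algebra_simps)
  moreover have "block_centre i - block_centre j = (real (block_shift i) - real (block_shift j)) * a"
    by (simp add: block_centre_def algebra_simps)
  then have "\<bar>block_centre i - block_centre j\<bar> = \<bar>real (block_shift i) - real (block_shift j)\<bar> * \<bar>a\<bar>"
    by (simp add: abs_mult)
  ultimately show False using assms by linarith
qed

lemma universal_fun_in_region:
  assumes "\<bar>x - block_centre i\<bar> < block_radius i"
  shows "universal_fun x = block i (x - block_centre i)"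
proof -
  have "(SOME i. \<bar>x - block_centre i\<bar> < block_radius i) = i"
    by (rule some_equality) (use assms block_regions_disjoint in blast)+
  then show ?thesis using assms unfolding universal_fun_def by auto
qed

lemma universal_fun_near_outside:
  assumes "\<forall>i. \<bar>x - block_centre i\<bar> \<ge> block_radius i" "\<bar>y - x\<bar> < 1"
  shows "universal_fun y = 0"
proof (cases "\<exists>i. \<bar>y - block_centre i\<bar> < block_radius i")
  case True
  then obtain i where i: "\<bar>y - block_centre i\<bar> < block_radius i" by blast
  have "\<bar>y - block_centre i\<bar> \<ge> 2 * real (block_size i)"
    using assms(1)[rule_format, of i] assms(2) block_radius_ge[of i] by linarith
  then show ?thesis using universal_fun_in_region[OF i] block_eq_0 by simp
qed (auto simp: universal_fun_def)

lemma smooth_on_universal_fun: "smooth_on UNIV universal_fun"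
proof (rule smooth_on_locally)
  fix x
  show "\<exists>U g. open U \<and> x \<in> U \<and> smooth_on U g \<and> (\<forall>y\<in>U. universal_fun y = g y)"
  proof (cases "\<exists>i. \<bar>x - block_centre i\<bar> < block_radius i")
    case True
    then obtain i where i: "\<bar>x - block_centre i\<bar> < block_radius i" by blast
    let ?U = "{block_centre i - block_radius i <..< block_centre i + block_radius i}"
    have "open ?U" "x \<in> ?U" using i by auto
    moreover have "smooth_on ?U (\<lambda>y. block i (y + - block_centre i))"
      using smooth_on_shift[OF smooth_on_block] smooth_on_subset by blast
    moreover have "\<forall>y\<in>?U. universal_fun y = block i (y + - block_centre i)"
      using universal_fun_in_region by (auto simp: abs_less_iff)
    ultimately show ?thesis by blast
  next
    case False
    then have "\<forall>y\<in>ball x 1. universal_fun y = 0"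
      using universal_fun_near_outside[of x] by (simp add: not_less dist_real_def abs_minus_commute)
    then show ?thesis using smooth_on_const by (intro exI[of _ "ball x 1"]) auto
  qed
qed

text \<open>Translating by \<open>n\<^sub>i a\<close> brings block \<open>i\<close> to the origin, where it equals its polynomial on
  \<open>(-m\<^sub>i, m\<^sub>i)\<close>; choosing \<open>i\<close> to code \<open>(k, p)\<close> makes \<open>m\<^sub>i = k + 1\<close>.\<close>

lemma universal_fun_orbit_approx:
  assumes "smooth_on UNIV w" "\<delta> > 0"
  shows "\<exists>n. derivs_bounded k (\<lambda>x. (tau a ^^ n) universal_fun x - w x) \<delta>"
proof -
  obtain p where p: "gauss_rat_poly p" "derivs_bounded k (\<lambda>x. poly p (of_real x) - w x) \<delta>"
    using gauss_rat_poly_approx[OF assms] by blast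
  obtain cs where cs: "poly_of_rat_pairs cs = p"
    using gauss_rat_poly_eq_poly_of_rat_pairs[OF p(1)] by blast
  define i where "i = to_nat (k, cs)"
  have size: "block_size i = Suc k" and bp: "block_poly i = p"
    by (simp_all add: block_code_def block_size_def block_poly_def i_def cs)
  have "(tau a ^^ block_shift i) universal_fun y = poly p (of_real y)"
    if "y \<in> {-real k - 1<..<real k + 1}" for y
  proof -
    have "\<bar>y\<bar> < block_radius i" using that block_radius_ge[of i] size by auto
    then have "(tau a ^^ block_shift i) universal_fun y = block i y"
      using universal_fun_in_region[of "y + block_centre i" i] by (simp add: funpow_tau block_centre_def)
    also have "\<dots> = poly p (of_real y)" using block_eq_poly[of y i] that size bp by auto
    finally show ?thesis .
  qed
  then have "derivs_bounded k (\<lambda>x. (tau a ^^ block_shift i) universal_fun x - w x) \<delta>"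
    by (intro derivs_bounded_cong_open[OF p(2)]) simp
  then show ?thesis by blast
qed

end

lemma tau_universal_vector:
  fixes a :: real
  assumes "a \<noteq> 0"
  obtains f where "smooth_on UNIV f"
    and "\<And>w k \<delta>. smooth_on UNIV w \<Longrightarrow> \<delta> > 0 \<Longrightarrow> \<exists>n. derivs_bounded k (\<lambda>x. (tau a ^^ n) f x - w x) \<delta>"
  using smooth_on_universal_fun[OF assms] universal_fun_orbit_approx[OF assms] by blast
section \<open>Polynomials as covering maps off their critical values\<close>

lemma finite_disjoint_balls:
  fixes F :: "'a::metric_space set"
  assumes "finite F" "\<And>z. z \<in> F \<Longrightarrow> \<rho> z > 0"
  obtains r where "r > 0" "\<And>z. z \<in> F \<Longrightarrow> r \<le> \<rho> z"
    "\<And>z z'. z \<in> F \<Longrightarrow> z' \<in> F \<Longrightarrow> z \<noteq> z' \<Longrightarrow> ball z r \<inter> ball z' r = {}"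
proof -
  define Rs where "Rs = insert 1 (\<rho> ` F \<union> (\<lambda>(z, z'). dist z z' / 2) ` {(z, z'). z \<in> F \<and> z' \<in> F \<and> z \<noteq> z'})"
  have finRs: "finite Rs" unfolding Rs_def
    by (intro finite_insert[THEN iffD2] finite_UnI finite_imageI
        finite_subset[OF _ finite_cartesian_product[OF assms(1) assms(1)]]) (auto simp: assms(1))
  have pos: "Min Rs > 0" using finRs assms(2) by (auto simp: Rs_def Min_gr_iff)
  have le: "Min Rs \<le> \<rho> z" if "z \<in> F" for z
    using finRs that by (intro Min_le) (auto simp: Rs_def)
  have disj: "ball z (Min Rs) \<inter> ball z' (Min Rs) = {}" if "z \<in> F" "z' \<in> F" "z \<noteq> z'" for z z'
  proof -
    have "Min Rs \<le> dist z z' / 2"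
      using finRs that by (intro Min_le) (auto simp: Rs_def image_iff intro!: bexI[of _ "(z, z')"])
    show ?thesis
    proof (rule ccontr)
      assume "ball z (Min Rs) \<inter> ball z' (Min Rs) \<noteq> {}"
      then obtain x where "dist z x < Min Rs" "dist z' x < Min Rs" by auto
      then show False
        using dist_triangle[of z z' x] \<open>Min Rs \<le> dist z z' / 2\<close> by (simp add: dist_commute)
    qed
  qed
  show ?thesis by (rule that[OF pos le disj])
qed

lemma holomorphic_on_poly: "poly p holomorphic_on A"
  using poly_holomorphic_on[of "\<lambda>z. z" A p] holomorphic_on_id by simp

context
  fixes P :: "complex poly"
  assumes degree_P: "degree P > 0"
begin

definition critical_values :: "complex set" where
  "critical_values = poly P ` {z. poly (pderiv P) z = 0}"

lemma finite_critical_values: "finite critical_values"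
proof -
  have "pderiv P \<noteq> 0" using degree_P pderiv_eq_0_iff[of P] by auto
  then show ?thesis unfolding critical_values_def using poly_roots_finite by blast
qed

lemma finite_poly_fiber: "finite {z. poly P z = y}"
proof -
  have "P - [:y:] \<noteq> 0" using degree_P by auto
  then show ?thesis using poly_roots_finite[of "P - [:y:]"] by simp
qed

lemma poly_fiber_nonempty: "\<exists>z. poly P z = y"
proof -
  let ?Q = "P + [:-y:]"
  have deg: "degree ?Q = degree P" using degree_P by (intro degree_add_eq_left) auto
  then have "coeff ?Q (degree ?Q) \<noteq> 0" using degree_P by (metis leading_coeff_0_iff degree_0 less_irrefl)
  then have "coeff ?Q 0 = 0 \<or> (\<exists>i\<in>{1..degree ?Q}. coeff ?Q i \<noteq> 0)" using deg degree_P by auto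
  then obtain z where "(\<Sum>i\<le>degree ?Q. coeff ?Q i * z^i) = 0"
    using fundamental_theorem_of_algebra[of "coeff ?Q" "degree ?Q"] by blast
  then have "poly ?Q z = 0" by (simp add: poly_altdef)
  then show ?thesis by auto
qed

lemma poly_fiber_attracts_preimages:
  assumes "r > 0"
  obtains e where "e > 0" "\<And>x. dist (poly P x) y < e \<Longrightarrow> \<exists>z. poly P z = y \<and> dist z x < r"
proof -
  have "filterlim (poly P) at_infinity at_infinity" using filterlim_poly_at_infinity degree_P by blast
  then have "\<forall>r>0. eventually (\<lambda>z. r \<le> norm (poly P z)) at_infinity"
    using filterlim_at_infinity[of 0 "poly P" at_infinity] by auto
  then have "eventually (\<lambda>z. norm y + 1 \<le> norm (poly P z)) at_infinity"
    by (simp add: add_nonneg_pos)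
  then obtain R where R: "\<And>z. norm z \<ge> R \<Longrightarrow> norm (poly P z) \<ge> norm y + 1"
    unfolding eventually_at_infinity by blast
  define K where "K = cball 0 R - (\<Union>z\<in>{z. poly P z = y}. ball z r)"
  have "compact K" unfolding K_def by (intro compact_diff compact_cball open_UN ballI open_ball)
  then have "closed (poly P ` K)"
    by (intro compact_imp_closed compact_continuous_image holomorphic_on_imp_continuous_on[OF holomorphic_on_poly])
  moreover have "y \<notin> poly P ` K" using assms unfolding K_def by auto
  ultimately obtain e where e: "e > 0" "ball y e \<subseteq> - poly P ` K"
    unfolding closed_def open_contains_ball by blast
  have near: "\<exists>z. poly P z = y \<and> dist z x < r" if x: "dist (poly P x) y < min e 1" for x
  proof -
    have "norm (poly P x) < norm y + 1"
      using x norm_triangle_ineq2[of "poly P x" y] by (simp add: dist_norm)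
    then have "x \<in> cball 0 R" using R[of x] by (cases "R \<le> norm x") auto
    moreover have "x \<notin> K" using x e(2) by (auto simp: dist_commute)
    ultimately show ?thesis unfolding K_def by (auto simp: dist_commute)
  qed
  show ?thesis by (rule that[of "min e 1", OF _ near]) (use e(1) in simp)
qed

lemma poly_locally_injective:
  assumes "poly (pderiv P) z \<noteq> 0"
  obtains r where "r > 0" "inj_on (poly P) (ball z r)"
proof -
  have "deriv (poly P) z \<noteq> 0" using assms by (simp add: DERIV_imp_deriv[OF poly_DERIV])
  then obtain r where "r > 0" "ball z r \<subseteq> UNIV" "inj_on (poly P) (ball z r)"
    by (rule has_complex_derivative_locally_injective[OF holomorphic_on_poly UNIV_I open_UNIV])
  then show ?thesis using that by blast
qed

lemma poly_regular_value_sheets: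
  assumes y: "y \<notin> critical_values"
  obtains r e where "r > 0" "e > 0" "ball y e \<subseteq> - critical_values"
    and "\<And>z z'. poly P z = y \<Longrightarrow> poly P z' = y \<Longrightarrow> z \<noteq> z' \<Longrightarrow> ball z r \<inter> ball z' r = {}"
    and "\<And>z. poly P z = y \<Longrightarrow> inj_on (poly P) (ball z r)"
    and "\<And>z. poly P z = y \<Longrightarrow> ball y e \<subseteq> poly P ` ball z r"
    and "\<And>x. dist (poly P x) y < e \<Longrightarrow> \<exists>z. poly P z = y \<and> dist z x < r"
proof -
  define F where "F = {z. poly P z = y}"
  have finF: "finite F" unfolding F_def by (rule finite_poly_fiber)
  have "\<exists>r>0. inj_on (poly P) (ball z r)" if "z \<in> F" for z
  proof -
    have "poly (pderiv P) z \<noteq> 0" using y that unfolding F_def critical_values_def by auto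
    then obtain r where "r > 0" "inj_on (poly P) (ball z r)" by (rule poly_locally_injective)
    then show ?thesis by blast
  qed
  then obtain \<rho> where \<rho>: "\<And>z. z \<in> F \<Longrightarrow> \<rho> z > 0 \<and> inj_on (poly P) (ball z (\<rho> z))" by metis
  obtain r where r: "r > 0" "\<And>z. z \<in> F \<Longrightarrow> r \<le> \<rho> z"
    and disj: "\<And>z z'. z \<in> F \<Longrightarrow> z' \<in> F \<Longrightarrow> z \<noteq> z' \<Longrightarrow> ball z r \<inter> ball z' r = {}"
    using finite_disjoint_balls[OF finF, of \<rho>] \<rho> by blast
  have inj: "inj_on (poly P) (ball z r)" if "z \<in> F" for z
    using \<rho>[OF that] r(2)[OF that] by (meson inj_on_subset subset_ball)
  have "\<exists>e>0. ball y e \<subseteq> poly P ` ball z r" if "z \<in> F" for z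
  proof -
    have "open (poly P ` ball z r)" by (rule open_mapping_thm3[OF holomorphic_on_poly open_ball inj[OF that]])
    moreover have "y \<in> poly P ` ball z r" using that r(1) unfolding F_def by auto
    ultimately show ?thesis unfolding open_contains_ball by blast
  qed
  then obtain \<epsilon> where \<epsilon>: "\<And>z. z \<in> F \<Longrightarrow> \<epsilon> z > 0 \<and> ball y (\<epsilon> z) \<subseteq> poly P ` ball z r" by metis
  obtain e1 where e1: "e1 > 0" "\<And>x. dist (poly P x) y < e1 \<Longrightarrow> \<exists>z. poly P z = y \<and> dist z x < r"
    using poly_fiber_attracts_preimages[OF r(1), where y = y] by blast
  have "open (- critical_values)"
    using finite_critical_values by (simp add: finite_imp_closed open_Compl)
  then obtain e2 where e2: "e2 > 0" "ball y e2 \<subseteq> - critical_values"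
    using y unfolding open_contains_ball by blast
  define Es where "Es = insert e1 (insert e2 (\<epsilon> ` F))"
  have fin: "finite Es" using finF by (simp add: Es_def)
  have "\<And>x. x \<in> Es \<Longrightarrow> x > 0" unfolding Es_def using e1(1) e2(1) \<epsilon> by auto
  then have e0: "Min Es > 0" using fin by (simp add: Min_gr_iff Es_def)
  have e: "Min Es \<le> e1" "Min Es \<le> e2" using fin by (auto intro!: Min_le simp del: Min_insert simp: Es_def)
  have e_eps: "Min Es \<le> \<epsilon> z" if "z \<in> F" for z using fin that by (intro Min_le) (auto simp: Es_def)
  show ?thesis
  proof (rule that[OF r(1) e0])
    show "ball y (Min Es) \<subseteq> - critical_values" using subset_ball[OF e(2)] e2(2) by blast
    show "ball z r \<inter> ball z' r = {}" if "poly P z = y" "poly P z' = y" "z \<noteq> z'" for z z'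
      using disj that unfolding F_def by blast
    show "inj_on (poly P) (ball z r)" if "poly P z = y" for z
      using inj that unfolding F_def by blast
    show "ball y (Min Es) \<subseteq> poly P ` ball z r" if "poly P z = y" for z
      using \<epsilon>[of z] subset_ball[OF e_eps[of z]] that unfolding F_def by blast
    show "\<exists>z. poly P z = y \<and> dist z x < r" if "dist (poly P x) y < Min Es" for x
      using e1(2)[of x] e(1) that by simp
  qed
qed

text \<open>Around a regular value \<open>y\<close> the sheets are the preimages of a small disc \<open>T\<close> inside
  disjoint discs about the (finitely many) points of the fibre on which \<open>P\<close> is injective.\<close>

lemma poly_covering_space: "covering_space {z. poly P z \<notin> critical_values} (poly P) (- critical_values)"
proof (rule covering_spaceI)
  show "continuous_on {z. poly P z \<notin> critical_values} (poly P)"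
    by (rule holomorphic_on_imp_continuous_on[OF holomorphic_on_poly])
  show "poly P ` {z. poly P z \<notin> critical_values} = - critical_values"
    using poly_fiber_nonempty by (auto simp: image_def) (metis)
  fix y assume y: "y \<in> - critical_values"
  obtain r e where r: "r > 0" and e: "e > 0" and T_regular: "ball y e \<subseteq> - critical_values"
    and disj: "\<And>z z'. poly P z = y \<Longrightarrow> poly P z' = y \<Longrightarrow> z \<noteq> z' \<Longrightarrow> ball z r \<inter> ball z' r = {}"
    and inj: "\<And>z. poly P z = y \<Longrightarrow> inj_on (poly P) (ball z r)"
    and onto: "\<And>z. poly P z = y \<Longrightarrow> ball y e \<subseteq> poly P ` ball z r"
    and near: "\<And>x. dist (poly P x) y < e \<Longrightarrow> \<exists>z. poly P z = y \<and> dist z x < r"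
    by (rule poly_regular_value_sheets[of y]) (use y in auto)
  define V where "V = (\<lambda>z. ball z r \<inter> poly P -` ball y e) ` {z. poly P z = y}"
  have open_sheet: "open (ball z r \<inter> poly P -` ball y e)" for z
    by (intro open_Int open_ball open_vimage continuous_intros)
  show "\<exists>T. y \<in> T \<and> openin (top_of_set (- critical_values)) T \<and>
          (\<exists>v. \<Union>v = {z. poly P z \<notin> critical_values} \<inter> poly P -` T \<and>
               (\<forall>u\<in>v. openin (top_of_set {z. poly P z \<notin> critical_values}) u) \<and>
               pairwise disjnt v \<and> (\<forall>u\<in>v. \<exists>q. homeomorphism u T (poly P) q))"
  proof (intro exI conjI)
    show "y \<in> ball y e" using e by simp
    show "openin (top_of_set (- critical_values)) (ball y e)"
      using T_regular by (metis Int_absorb1 open_ball openin_open_Int inf_commute)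
    show "\<Union>V = {z. poly P z \<notin> critical_values} \<inter> poly P -` ball y e"
    proof
      show "\<Union>V \<subseteq> {z. poly P z \<notin> critical_values} \<inter> poly P -` ball y e"
        using T_regular unfolding V_def by auto
      show "{z. poly P z \<notin> critical_values} \<inter> poly P -` ball y e \<subseteq> \<Union>V"
      proof
        fix x assume x: "x \<in> {z. poly P z \<notin> critical_values} \<inter> poly P -` ball y e"
        then obtain z where "poly P z = y" "dist z x < r" using near[of x] by (auto simp: dist_commute)
        then show "x \<in> \<Union>V" using x unfolding V_def by auto
      qed
    qed
    show "pairwise disjnt V"
      unfolding V_def pairwise_def disjnt_def using disj by blast
    show "\<forall>u\<in>V. openin (top_of_set {z. poly P z \<notin> critical_values}) u"
    proof
      fix u assume "u \<in> V"
      then obtain z where z: "u = ball z r \<inter> poly P -` ball y e" unfolding V_def by auto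
      have "u \<subseteq> {z. poly P z \<notin> critical_values}" using T_regular z by auto
      then show "openin (top_of_set {z. poly P z \<notin> critical_values}) u"
        using open_sheet[of z] z by (metis inf.absorb_iff2 openin_open_Int)
    qed
    show "\<forall>u\<in>V. \<exists>q. homeomorphism u (ball y e) (poly P) q"
    proof
      fix u assume "u \<in> V"
      then obtain z where z: "poly P z = y" "u = ball z r \<inter> poly P -` ball y e" unfolding V_def by auto
      have "poly P ` u = ball y e"
        using onto[OF z(1)] z(2) by auto
      moreover obtain q where "homeomorphism u (poly P ` u) (poly P) q"
      proof (rule invariance_of_domain_homeomorphism)
        show "open u" using open_sheet[of z] z(2) by simp
        show "continuous_on u (poly P)" by (rule holomorphic_on_imp_continuous_on[OF holomorphic_on_poly])
        show "inj_on (poly P) u" using inj[OF z(1)] z(2) inj_on_subset by blast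
      qed auto
      ultimately show "\<exists>q. homeomorphism u (ball y e) (poly P) q" by auto
    qed
  qed
qed

end
section \<open>Composition with a nonconstant polynomial has dense range\<close>

lemma small_shift_avoids_finite_set:
  fixes g :: "real \<Rightarrow> complex" and V :: "complex set"
  assumes "smooth_on UNIV g" "finite V" "e > 0"
  obtains c where "norm c < e" "\<And>x. x \<in> {-K..K} \<Longrightarrow> g x + c \<notin> V"
proof -
  text \<open>The shifts to avoid form the images of finitely many curves, a null set in \<open>\<complex>\<close>.\<close>
  define Bad where "Bad = (\<Union>v\<in>V. (\<lambda>x. v - g x) ` {-K..K})"
  have "negligible ((\<lambda>x. v - g x) ` {-K..K})" for v
  proof (rule negligible_differentiable_image_lowdim)
    show "(\<lambda>x. v - g x) differentiable_on {-K..K}"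
      by (intro differentiable_at_imp_differentiable_on ballI differentiable_diff differentiable_const)
        (use smooth_on_differentiable[OF assms(1), of _ 0] in auto)
  qed simp
  then have "negligible Bad" unfolding Bad_def using assms(2) by (intro negligible_Union) auto
  then have "\<not> ball 0 e \<subseteq> Bad"
    using negligible_subset[OF \<open>negligible Bad\<close>] open_not_negligible[of "ball (0::complex) e"] assms(3)
    by auto
  then obtain c where c: "c \<in> ball 0 e" "c \<notin> Bad" by blast
  have avoid: "g x + c \<notin> V" if "x \<in> {-K..K}" for x
    using c(2) that unfolding Bad_def by (auto intro!: bexI[of _ "g x + c"] image_eqI[of _ _ x])
  show ?thesis by (rule that[OF _ avoid]) (use c(1) in simp)
qed

context
  fixes P :: "complex poly"
  assumes degree_P: "degree P > 0"
begin

lemma poly_lift_curve: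
  fixes K :: real and \<gamma> :: "real \<Rightarrow> complex"
  assumes "K > 0" "continuous_on {-K..K} \<gamma>" "\<And>t. t \<in> {-K..K} \<Longrightarrow> \<gamma> t \<notin> critical_values P"
  obtains h where "continuous_on {-K..K} h" "\<And>t. t \<in> {-K..K} \<Longrightarrow> poly P (h t) = \<gamma> t"
proof -
  have aff: "-K + 2 * K * s \<in> {-K..K}" if "s \<in> {0..1}" for s
    using that assms(1) by (auto simp: mult_left_le)
  have path: "path (\<lambda>s. \<gamma> (-K + 2 * K * s))"
    unfolding path_def using aff
    by (intro continuous_on_compose2[OF assms(2)] continuous_intros) auto
  have image: "path_image (\<lambda>s. \<gamma> (-K + 2 * K * s)) \<subseteq> - critical_values P"
    unfolding path_image_def using assms(3) aff by auto
  obtain h0 where h0: "path h0" "path_image h0 \<subseteq> {z. poly P z \<notin> critical_values P}"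
    "\<And>s. s \<in> {0..1} \<Longrightarrow> poly P (h0 s) = \<gamma> (-K + 2 * K * s)"
    using covering_space_lift_path[OF poly_covering_space[OF degree_P] path image] by blast
  have unit: "(t + K) / (2 * K) \<in> {0..1}" if "t \<in> {-K..K}" for t
    using that assms(1) by (auto simp: field_simps)
  show ?thesis
  proof
    show "continuous_on {-K..K} (\<lambda>t. h0 ((t + K) / (2 * K)))"
      using unit assms(1) by (intro continuous_on_compose2[OF h0(1)[unfolded path_def]] continuous_intros) auto
    show "poly P (h0 ((t + K) / (2 * K))) = \<gamma> t" if "t \<in> {-K..K}" for t
      using h0(3)[OF unit[OF that]] assms(1) by (simp add: field_simps)
  qed
qed

text \<open>A continuous lift of a smooth curve avoiding the critical values is smooth: near each point
  it is the smooth curve composed with a local holomorphic inverse of \<open>P\<close>.\<close>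

lemma smooth_on_poly_lift:
  assumes g: "smooth_on UNIV g" and h: "continuous_on {-K..K} h"
    and lift: "\<And>t. t \<in> {-K..K} \<Longrightarrow> poly P (h t) = g t"
    and regular: "\<And>t. t \<in> {-K..K} \<Longrightarrow> g t \<notin> critical_values P"
  shows "smooth_on {-K<..<K} h"
proof (rule smooth_on_locally)
  fix t0 assume t0: "t0 \<in> {-K<..<K}"
  have "poly (pderiv P) (h t0) \<noteq> 0"
  proof
    assume "poly (pderiv P) (h t0) = 0"
    moreover have "g t0 = poly P (h t0)" using lift[of t0] t0 by simp
    ultimately have "g t0 \<in> critical_values P"
      unfolding critical_values_def[OF degree_P] by (intro rev_image_eqI[where f = "poly P"]) auto
    then show False using regular[of t0] t0 by simp
  qed
  then obtain r where r: "r > 0" "inj_on (poly P) (ball (h t0) r)"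
    by (rule poly_locally_injective[OF degree_P])
  obtain q where q: "q holomorphic_on (poly P ` ball (h t0) r)"
    "\<And>z. z \<in> ball (h t0) r \<Longrightarrow> deriv (poly P) z * deriv q (poly P z) = 1"
    "\<And>z. z \<in> ball (h t0) r \<Longrightarrow> q (poly P z) = z"
    using holomorphic_has_inverse[OF holomorphic_on_poly open_ball r(2)] by blast
  have "isCont h t0" using continuous_on_interior[OF h] t0 by simp
  then obtain d where d: "d > 0" "\<And>t. dist t t0 < d \<Longrightarrow> dist (h t) (h t0) < r"
    using r(1) unfolding continuous_at_eps_delta by blast
  define U where "U = ball t0 (min d (min (K - t0) (t0 + K)))"
  have UK: "t \<in> {-K..K}" if "t \<in> U" for t
    using that by (auto simp: U_def dist_real_def)
  have hU: "h t \<in> ball (h t0) r" if "t \<in> U" for t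
    using that d(2)[of t] by (auto simp: U_def dist_commute)
  have "smooth_on U (\<lambda>t. q (g t))"
  proof (rule smooth_on_holomorphic_comp[OF _ open_mapping_thm3[OF holomorphic_on_poly open_ball r(2)] q(1)])
    show "g t \<in> poly P ` ball (h t0) r" if "t \<in> U" for t
      by (rule rev_image_eqI[where f = "poly P", OF hU[OF that] lift[OF UK[OF that], symmetric]])
    show "smooth_on U g" using smooth_on_subset[OF g subset_UNIV] .
  qed (simp add: U_def)
  moreover have "\<forall>t\<in>U. h t = q (g t)" using q(3)[OF hU] lift[OF UK] by simp
  moreover have "open U" "t0 \<in> U" using d(1) t0 by (auto simp: U_def)
  ultimately show "\<exists>U g. open U \<and> t0 \<in> U \<and> smooth_on U g \<and> (\<forall>y\<in>U. h y = g y)"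
    by (intro exI[of _ U] exI[of _ "\<lambda>t. q (g t)"]) simp
qed

text \<open>Shift \<open>g\<close> by a small constant to avoid the critical values on \<open>[-K, K]\<close>, lift it through
  \<open>P\<close>, and cut the lift off outside \<open>[-2(k + 1), 2(k + 1)]\<close>.\<close>

lemma poly_comp_dense:
  assumes g: "smooth_on UNIV g" and e: "e > 0"
  obtains w where "smooth_on UNIV w" "derivs_bounded k (\<lambda>x. poly P (w x) - g x) e"
proof -
  define m where "m = real k + 1"
  define K where "K = 2 * m + 1"
  have m: "m > 0" and K: "K > 2 * m" by (simp_all add: m_def K_def)
  obtain c where c: "norm c < e" "\<And>x. x \<in> {-K..K} \<Longrightarrow> g x + c \<notin> critical_values P"
    using small_shift_avoids_finite_set[OF g finite_critical_values[OF degree_P] e] by blast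
  have gc: "smooth_on UNIV (\<lambda>x. g x + c)" using smooth_on_add[OF _ g smooth_on_const] by simp
  obtain h where h: "continuous_on {-K..K} h" "\<And>t. t \<in> {-K..K} \<Longrightarrow> poly P (h t) = g t + c"
  proof (rule poly_lift_curve[of K "\<lambda>t. g t + c"])
    show "K > 0" using K m by simp
  qed (use smooth_on_imp_continuous_on[OF gc] c(2) in auto)
  have sh: "smooth_on {-K<..<K} h"
    by (rule smooth_on_poly_lift[OF gc h]) (use h(2) c(2) in auto)
  define w where "w x = bump (x / m) * h x" for x
  have smooth_w: "smooth_on UNIV w"
    unfolding w_def[abs_def] using smooth_on_cutoff[OF sh m K] .
  have "derivs_bounded k (\<lambda>x. poly P (w x) - g x) e"
  proof (rule derivs_bounded_cong_open)
    show "derivs_bounded k (\<lambda>x. c) e"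
      using derivs_bounded_mono[OF derivs_bounded_const[of k c]] c(1) by simp
    show "poly P (w y) - g y = c" if y: "y \<in> {-real k - 1<..<real k + 1}" for y
    proof -
      have "\<bar>y / m\<bar> \<le> 1" using y m by (auto simp: m_def abs_divide field_simps)
      then have "w y = h y" by (simp add: w_def bump_eq_1)
      moreover have "y \<in> {-K..K}" using y by (auto simp: K_def m_def)
      ultimately show ?thesis using h(2) by simp
    qed
  qed
  then show ?thesis by (rule that[OF smooth_w])
qed

end
section \<open>The hypercyclic algebra\<close>

lemma derivs_bounded_poly_comp_lipschitz:
  fixes P :: "complex poly"
  shows "\<exists>B C. \<forall>u v \<delta>. smooth_on UNIV u \<and> smooth_on UNIV v \<and> derivs_bounded k u A \<and> derivs_bounded k v A \<and>
      derivs_bounded k (\<lambda>x. u x - v x) \<delta> \<longrightarrow>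
     derivs_bounded k (\<lambda>x. poly P (u x)) B \<and> derivs_bounded k (\<lambda>x. poly P (u x) - poly P (v x)) (C * \<delta>)"
proof (induction P)
  case 0
  show ?case by (intro exI[of _ 0]) (simp add: derivs_bounded_def vderiv_const)
next
  case (pCons a Q)
  then obtain B C where IH: "\<And>u v \<delta>. smooth_on UNIV u \<Longrightarrow> smooth_on UNIV v \<Longrightarrow>
      derivs_bounded k u A \<Longrightarrow> derivs_bounded k v A \<Longrightarrow> derivs_bounded k (\<lambda>x. u x - v x) \<delta> \<Longrightarrow>
      derivs_bounded k (\<lambda>x. poly Q (u x)) B \<and> derivs_bounded k (\<lambda>x. poly Q (u x) - poly Q (v x)) (C * \<delta>)"
    by blast
  text \<open>Horner step: \<open>(a + u Q(u)) - (a + v Q(v)) = (u - v) Q(u) + v (Q(u) - Q(v))\<close>.\<close>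
  have "derivs_bounded k (\<lambda>x. poly (pCons a Q) (u x)) (norm a + 2 ^ k * A * B) \<and>
      derivs_bounded k (\<lambda>x. poly (pCons a Q) (u x) - poly (pCons a Q) (v x)) ((2 ^ k * B + 2 ^ k * A * C) * \<delta>)"
    if u: "smooth_on UNIV u" "derivs_bounded k u A" and v: "smooth_on UNIV v" "derivs_bounded k v A"
      and uv: "derivs_bounded k (\<lambda>x. u x - v x) \<delta>" for u v \<delta>
  proof
    have Qu: "smooth_on UNIV (\<lambda>x. poly Q (u x))" and Qv: "smooth_on UNIV (\<lambda>x. poly Q (v x))"
      using smooth_on_poly_comp u(1) v(1) by auto
    obtain bQ: "derivs_bounded k (\<lambda>x. poly Q (u x)) B"
      and cQ: "derivs_bounded k (\<lambda>x. poly Q (u x) - poly Q (v x)) (C * \<delta>)"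
      using IH[OF u(1) v(1) u(2) v(2) uv] by blast
    have "derivs_bounded k (\<lambda>x. a + u x * poly Q (u x)) (norm a + 2 ^ k * A * B)"
      by (intro derivs_bounded_add derivs_bounded_mult derivs_bounded_const smooth_on_const
          smooth_on_mult u Qu bQ) simp_all
    then show "derivs_bounded k (\<lambda>x. poly (pCons a Q) (u x)) (norm a + 2 ^ k * A * B)"
      by simp
    have "smooth_on UNIV (\<lambda>x. u x - v x)" "smooth_on UNIV (\<lambda>x. poly Q (u x) - poly Q (v x))"
      by (intro smooth_on_diff u v Qu Qv open_UNIV)+
    then have "derivs_bounded k (\<lambda>x. (u x - v x) * poly Q (u x) + v x * (poly Q (u x) - poly Q (v x)))
        (2 ^ k * \<delta> * B + 2 ^ k * A * (C * \<delta>))"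
      by (intro derivs_bounded_add derivs_bounded_mult smooth_on_mult u v Qu uv bQ cQ) simp_all
    then show "derivs_bounded k (\<lambda>x. poly (pCons a Q) (u x) - poly (pCons a Q) (v x))
        ((2 ^ k * B + 2 ^ k * A * C) * \<delta>)"
      by (simp add: algebra_simps)
  qed
  then show ?case by blast
qed

text \<open>\<open>\<tau>\<^sub>a\<close> commutes with \<open>w \<mapsto> P \<circ> w\<close>, so approximating \<open>w\<close> (with \<open>P \<circ> w \<approx> g\<close>) by a
  translate of \<open>f\<close> makes the same translate of \<open>P \<circ> f\<close> approximate \<open>g\<close>.\<close>

lemma hypercyclic_vector_poly_comp:
  fixes f :: "real \<Rightarrow> complex" and P :: "complex poly"
  assumes f: "smooth_on UNIV f"
    and universal: "\<And>w k \<delta>. smooth_on UNIV w \<Longrightarrow> \<delta> > 0 \<Longrightarrow>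
      \<exists>n. derivs_bounded k (\<lambda>x. (tau a ^^ n) f x - w x) \<delta>"
    and degree_P: "degree P > 0"
  shows "hypercyclic_vector (tau a) (\<lambda>x. poly P (f x))"
  unfolding hypercyclic_vector_def
proof (intro ballI allI impI)
  fix g k and e :: real assume g: "g \<in> smooth_fun" and e: "e > 0"
  obtain w where w: "smooth_on UNIV w" and Pw: "derivs_bounded k (\<lambda>x. poly P (w x) - g x) (e/3)"
    using poly_comp_dense[OF degree_P, of g "e/3" k] g e by (auto simp: smooth_fun_iff_smooth_on)
  obtain A where A: "derivs_bounded k w A" using derivs_bounded_exists[OF w] by blast
  obtain C where C: "\<And>u v \<delta>. smooth_on UNIV u \<Longrightarrow> smooth_on UNIV v \<Longrightarrow>
      derivs_bounded k u (\<bar>A\<bar> + 1) \<Longrightarrow> derivs_bounded k v (\<bar>A\<bar> + 1) \<Longrightarrow> derivs_bounded k (\<lambda>x. u x - v x) \<delta> \<Longrightarrow>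
      derivs_bounded k (\<lambda>x. poly P (u x) - poly P (v x)) (C * \<delta>)"
    using derivs_bounded_poly_comp_lipschitz[of k "\<bar>A\<bar> + 1" P] by blast
  define \<delta> where "\<delta> = min 1 (e / (3 * (\<bar>C\<bar> + 1)))"
  have \<delta>: "\<delta> > 0" "\<delta> \<le> 1" "C * \<delta> \<le> e / 3"
  proof -
    show "\<delta> > 0" "\<delta> \<le> 1" using e by (simp_all add: \<delta>_def)
    have "C * \<delta> \<le> \<bar>C\<bar> * \<delta>" using \<open>\<delta> > 0\<close> by (simp add: mult_right_mono)
    also have "\<dots> \<le> (\<bar>C\<bar> + 1) * (e / (3 * (\<bar>C\<bar> + 1)))"
      using \<open>\<delta> > 0\<close> by (intro mult_mono) (auto simp: \<delta>_def)
    also have "\<dots> = e / 3"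
      by (simp add: field_simps add_nonneg_pos)
    finally show "C * \<delta> \<le> e / 3" .
  qed
  obtain n where n: "derivs_bounded k (\<lambda>x. (tau a ^^ n) f x - w x) \<delta>"
    using universal[OF w \<delta>(1)] by blast
  define u where "u = (tau a ^^ n) f"
  have u: "smooth_on UNIV u" unfolding u_def funpow_tau by (rule smooth_on_shift[OF f])
  have "derivs_bounded k (\<lambda>x. (u x - w x) + w x) (\<delta> + A)"
    by (rule derivs_bounded_add[OF _ w _ A]) (use n u w in \<open>auto simp: u_def intro: smooth_on_diff\<close>)
  then have "derivs_bounded k u (\<bar>A\<bar> + 1)"
    using \<delta>(2) by (auto intro: derivs_bounded_mono)
  then have "derivs_bounded k (\<lambda>x. poly P (u x) - poly P (w x)) (C * \<delta>)"
    using C[OF u w _ derivs_bounded_mono[OF A]] n by (simp add: u_def)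
  then have "derivs_bounded k (\<lambda>x. poly P (u x) - poly P (w x)) (e / 3)"
    using \<delta>(3) by (rule derivs_bounded_mono)
  then have "derivs_bounded k (\<lambda>x. (poly P (u x) - poly P (w x)) + (poly P (w x) - g x)) (e/3 + e/3)"
    using g by (intro derivs_bounded_add Pw smooth_on_diff smooth_on_poly_comp u w)
      (simp_all add: smooth_fun_iff_smooth_on)
  then have "seminorm_p k (\<lambda>x. (tau a ^^ n) (\<lambda>x. poly P (f x)) x - g x) \<le> 2 * e / 3"
    by (intro seminorm_p_le) (simp add: u_def funpow_tau)
  then show "\<exists>n. seminorm_p k (\<lambda>x. (tau a ^^ n) (\<lambda>x. poly P (f x)) x - g x) < e"
    using e by (intro exI[of _ n]) simp
qed

definition poly_comp_algebra :: "(real \<Rightarrow> complex) \<Rightarrow> (real \<Rightarrow> complex) set" where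
  "poly_comp_algebra f = {(\<lambda>x. poly P (f x)) | P. poly P 0 = 0}"

lemma smooth_subalgebra_poly_comp_algebra:
  assumes "smooth_on UNIV f"
  shows "smooth_subalgebra (poly_comp_algebra f)"
  unfolding smooth_subalgebra_def
proof (intro conjI ballI allI)
  show "poly_comp_algebra f \<subseteq> smooth_fun"
    using smooth_on_poly_comp[OF open_UNIV assms]
    by (auto simp: poly_comp_algebra_def smooth_fun_iff_smooth_on)
  show "(\<lambda>x. 0) \<in> poly_comp_algebra f"
    unfolding poly_comp_algebra_def by (intro CollectI exI[of _ 0]) auto
  fix h1 h2 assume "h1 \<in> poly_comp_algebra f" "h2 \<in> poly_comp_algebra f"
  then obtain P1 P2 where "poly P1 0 = 0" "h1 = (\<lambda>x. poly P1 (f x))" "poly P2 0 = 0" "h2 = (\<lambda>x. poly P2 (f x))"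
    unfolding poly_comp_algebra_def by blast
  then show "(\<lambda>x. h1 x + h2 x) \<in> poly_comp_algebra f" "(\<lambda>x. h1 x * h2 x) \<in> poly_comp_algebra f"
    unfolding poly_comp_algebra_def by (intro CollectI exI[of _ "P1 + P2"] exI[of _ "P1 * P2"]; simp)+
next
  fix c :: complex and h assume "h \<in> poly_comp_algebra f"
  then obtain P where "poly P 0 = 0" "h = (\<lambda>x. poly P (f x))" unfolding poly_comp_algebra_def by blast
  then show "(\<lambda>x. c * h x) \<in> poly_comp_algebra f"
    unfolding poly_comp_algebra_def by (intro CollectI exI[of _ "smult c P"]) simp
qed

lemma poly_comp_algebra_nonzero:
  assumes "h \<in> poly_comp_algebra f" "h \<noteq> (\<lambda>x. 0)"
  obtains P where "degree P > 0" "h = (\<lambda>x. poly P (f x))"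
proof -
  obtain P where P: "poly P 0 = 0" "h = (\<lambda>x. poly P (f x))"
    using assms(1) unfolding poly_comp_algebra_def by blast
  have "degree P > 0"
  proof (rule ccontr)
    assume "\<not> degree P > 0"
    then obtain c where "P = [:c:]" by (metis degree_eq_zeroE neq0_conv)
    then show False using P assms(2) by simp
  qed
  then show ?thesis using that P(2) by blast
qed

theorem corollary21:
  fixes a :: real
  assumes "a \<noteq> 0"
  shows "supports_hypercyclic_algebra (tau a)"
proof -
  obtain f where f: "smooth_on UNIV f"
    and universal: "\<And>w k \<delta>. smooth_on UNIV w \<Longrightarrow> \<delta> > 0 \<Longrightarrow>
      \<exists>n. derivs_bounded k (\<lambda>x. (tau a ^^ n) f x - w x) \<delta>"
    using tau_universal_vector[OF assms] by blast
  have "f \<in> poly_comp_algebra f"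
    unfolding poly_comp_algebra_def by (intro CollectI exI[of _ "[:0, 1:]"]) simp
  moreover have "f \<noteq> (\<lambda>x. 0)"
  proof
    assume "f = (\<lambda>x. 0)"
    obtain n where "derivs_bounded 0 (\<lambda>x. (tau a ^^ n) f x - 1) (1/2)"
      using universal[OF smooth_on_const, of "1/2" 0] by auto
    then have "norm (vderiv 0 (\<lambda>x. (tau a ^^ n) f x - 1) 0) \<le> 1/2"
      unfolding derivs_bounded_def by auto
    then show False using \<open>f = (\<lambda>x. 0)\<close> by (simp add: funpow_tau)
  qed
  moreover have "hypercyclic_vector (tau a) h"
    if "h \<in> poly_comp_algebra f" "h \<noteq> (\<lambda>x. 0)" for h
    using poly_comp_algebra_nonzero[OF that] hypercyclic_vector_poly_comp[OF f universal] by metis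
  ultimately show ?thesis
    using smooth_subalgebra_poly_comp_algebra[OF f] unfolding supports_hypercyclic_algebra_def by blast
qed

end
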